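(* Let $\mathbb P$ be the law of a stationary simple point process on $\mathbb R^d$ with finite positive intensity $m$ and $\mathbb P(\xi\ne\emptyset)=1$, and let $p\in[1,\infty)$. Then $\mathbb E_0\big[\deg_{\mathrm{DT}(\xi)}(0)^p\big]<+\infty$ in each of the following cases: (C1) for some $\bar\alpha>0$ and $C_0>0$, $\sup_{x\in\mathbb R^d}\mathbb P_0(\xi(\Lambda_\ell(x))=0)\le C_0\ell^{-\bar\alpha}$ for all $\ell>0$, and $\rho_\gamma<+\infty$ for some $\gamma>p+1$ with $\bar\alpha>\frac{dp(\gamma-1)}{\gamma-1-p}$; (C2) $\rho_{1+p}<+\infty$ and $\mathbb P$ has finite range of dependence; (C3) $\rho_{1+p}<+\infty$, $\mathbb P$ has positive association, and Condition $C(\alpha)$ holds for some $\alpha>dp$.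
   Context: $\mathcal N$ = locally finite subsets of $\mathbb R^d$, identified with counting measures ($\xi(A)=\#(\xi\cap A)$), $\sigma$-algebra generated by $\xi\mapsto\xi(A)$; $\tau_x\xi=\xi-x$; stationarity: $\mathbb P(\tau_xA)=\mathbb P(A)$; $m=\mathbb E[\xi([0,1]^d)]$. $\Lambda_\ell(x)=x+[-\ell,\ell]^d$, $\Lambda_\ell=\Lambda_\ell(0)$. $\mathrm{DT}(\xi)$: graph on $\xi$ with edges $\{x,y\}$, $x\ne y$, whose Voronoi cells $\mathrm{Vor}(x|\xi)=\{y:|y-x|\le|y-z|\ \forall z\in\xi\}$ share a $(d-1)$-dimensional face; $\deg_{\mathrm{DT}(\xi)}(0)$ is the degree of the vertex $0$. $\rho_\gamma=\mathbb E[\xi([0,1]^d)^\gamma]$. Palm distribution $\mathbb P_0(A)=\frac1m\int d\mathbb P(\xi)\sum_{x\in\xi\cap[0,1]^d}\mathbf 1_A(\tau_x\xi)$ (concentrated on $\{0\in\xi\}$), expectation $\mathbb E_0$. Condition $C(\alpha)$: $\exists\kappa>0$ with $\mathbb P(\xi(\Lambda_\ell)=0)\le\kappa\ell^{-\alpha}$ for $\ell\ge1$. Finite range of dependence: $\exists L>0$ such that $\xi\cap A$, $\xi\cap B$ are $\mathbb P$-independent for Borel $A,B$ at distance $\ge L$. Positive association: $\mathrm{Cov}_{\mathbb P}(f(\xi(A_1),\dots,\xi(A_n)),g(\xi(B_1),\dots,\xi(B_k)))\ge0$ for weakly increasing $f,g$ and pairwise disjoint bounded Borel sets, whenever both have finite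 second moments. *)

theory Defs
  imports "HOL-Analysis.Analysis" "HOL-Probability.Probability"
begin

definition locfin :: "'a::euclidean_space set \<Rightarrow> bool" where
  "locfin \<xi> \<longleftrightarrow> (\<forall>K. bounded K \<longrightarrow> finite (\<xi> \<inter> K))"

definition N_space :: "'a::euclidean_space set measure" where
  "N_space = sigma {\<xi>. locfin \<xi>}
     {{\<xi>. locfin \<xi> \<and> card (\<xi> \<inter> A) = n} | A n. A \<in> sets borel \<and> bounded A}"

definition translate :: "'a::euclidean_space \<Rightarrow> 'a set \<Rightarrow> 'a set" where
  "translate x \<xi> = (\<lambda>y. y - x) ` \<xi>"

definition unit_cube :: "'a::euclidean_space set" where
  "unit_cube = cbox 0 One"

definition Lambda :: "real \<Rightarrow> 'a::euclidean_space \<Rightarrow> 'a set" where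
  "Lambda l x = cbox (x - l *\<^sub>R One) (x + l *\<^sub>R One)"

definition stationary :: "'a::euclidean_space set measure \<Rightarrow> bool" where
  "stationary P \<longleftrightarrow> (\<forall>x A. A \<in> sets P \<longrightarrow> measure P (translate x ` A) = measure P A)"

definition intensity :: "'a::euclidean_space set measure \<Rightarrow> real" where
  "intensity P = (\<integral>\<xi>. real (card (\<xi> \<inter> unit_cube)) \<partial>P)"

definition rho :: "'a::euclidean_space set measure \<Rightarrow> real \<Rightarrow> ennreal" where
  "rho P \<gamma> = (\<integral>\<^sup>+\<xi>. ennreal (real (card (\<xi> \<inter> unit_cube)) powr \<gamma>) \<partial>P)"

definition palm_exp :: "'a::euclidean_space set measure \<Rightarrow> ('a set \<Rightarrow> ennreal) \<Rightarrow> ennreal" where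
  "palm_exp P f = ennreal (1 / intensity P) *
     (\<integral>\<^sup>+\<xi>. (\<Sum>x\<in>\<xi> \<inter> unit_cube. f (translate x \<xi>)) \<partial>P)"

definition palm_prob :: "'a::euclidean_space set measure \<Rightarrow> 'a set set \<Rightarrow> ennreal" where
  "palm_prob P A = palm_exp P (indicator A)"

definition vor :: "'a::euclidean_space set \<Rightarrow> 'a \<Rightarrow> 'a set" where
  "vor \<xi> x = {y. \<forall>z\<in>\<xi>. dist y x \<le> dist y z}"

definition dt_edge :: "'a::euclidean_space set \<Rightarrow> 'a \<Rightarrow> 'a \<Rightarrow> bool" where
  "dt_edge \<xi> x y \<longleftrightarrow> x \<in> \<xi> \<and> y \<in> \<xi> \<and> x \<noteq> y \<and>
     (\<exists>F. F face_of vor \<xi> x \<and> F face_of vor \<xi> y \<and> aff_dim F = int DIM('a) - 1)"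

definition deg0_pow :: "'a::euclidean_space set \<Rightarrow> real \<Rightarrow> ennreal" where
  "deg0_pow \<xi> p = (if finite {y. dt_edge \<xi> 0 y}
      then ennreal (real (card {y. dt_edge \<xi> 0 y}) powr p) else \<infinity>)"

definition condC :: "'a::euclidean_space set measure \<Rightarrow> real \<Rightarrow> bool" where
  "condC P \<alpha> \<longleftrightarrow> (\<exists>\<kappa>>0. \<forall>l\<ge>1.
     measure P {\<xi>\<in>space P. \<xi> \<inter> Lambda l 0 = {}} \<le> \<kappa> * l powr (-\<alpha>))"

definition finite_range_dep :: "'a::euclidean_space set measure \<Rightarrow> bool" where
  "finite_range_dep P \<longleftrightarrow> (\<exists>L>0. \<forall>A B. A \<in> sets borel \<longrightarrow> B \<in> sets borel \<longrightarrow>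
     (\<forall>a\<in>A. \<forall>b\<in>B. dist a b \<ge> L) \<longrightarrow>
     prob_space.indep_var P N_space (\<lambda>\<xi>. \<xi> \<inter> A) N_space (\<lambda>\<xi>. \<xi> \<inter> B))"

definition pos_assoc :: "'a::euclidean_space set measure \<Rightarrow> bool" where
  "pos_assoc P \<longleftrightarrow> (\<forall>(As::'a set list) (Bs::'a set list) (f::nat list \<Rightarrow> real) (g::nat list \<Rightarrow> real).
     (\<forall>A\<in>set As. A \<in> sets borel \<and> bounded A) \<longrightarrow>
     (\<forall>B\<in>set Bs. B \<in> sets borel \<and> bounded B) \<longrightarrow>
     disjoint_family_on (\<lambda>i. As ! i) {..<length As} \<longrightarrow>
     disjoint_family_on (\<lambda>i. Bs ! i) {..<length Bs} \<longrightarrow>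
     (\<forall>xs ys. length xs = length As \<longrightarrow> list_all2 (\<le>) xs ys \<longrightarrow> f xs \<le> f ys) \<longrightarrow>
     (\<forall>xs ys. length xs = length Bs \<longrightarrow> list_all2 (\<le>) xs ys \<longrightarrow> g xs \<le> g ys) \<longrightarrow>
     integrable P (\<lambda>\<xi>. (f (map (\<lambda>A. card (\<xi> \<inter> A)) As))\<^sup>2) \<longrightarrow>
     integrable P (\<lambda>\<xi>. (g (map (\<lambda>B. card (\<xi> \<inter> B)) Bs))\<^sup>2) \<longrightarrow>
     (\<integral>\<xi>. f (map (\<lambda>A. card (\<xi> \<inter> A)) As) * g (map (\<lambda>B. card (\<xi> \<inter> B)) Bs) \<partial>P)
       - (\<integral>\<xi>. f (map (\<lambda>A. card (\<xi> \<inter> A)) As) \<partial>P) * (\<integral>\<xi>. g (map (\<lambda>B. card (\<xi> \<inter> B)) Bs) \<partial>P)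
       \<ge> 0)"

end

(*
  A Delaunay neighbour y of the origin shares a Voronoi face with it; any point z of that face
  satisfies |y| <= 2|z| and the ball B(z, |z|) contains no point of the configuration.  So if the
  farthest neighbour of a point x of the unit cube has norm in [2 S 2^j, 4 S 2^j), the empty ball
  of radius r = S 2^j contains one of finitely many grid cells of half-side r/(3d) that is empty,
  while all neighbours lie in Lambda(4r + 1).  This bounds deg^p pointwise by
  xi(Lambda(2S + 1))^p + sum_j sum_k 1{cell (j,k) empty} xi(Lambda(4 S 2^j + 1))^p, and by the
  definition of the Palm expectation it suffices that
  E[xi([0,1]^d) 1{cell empty} xi(Lambda(4r + 1))^p] = O(r^-e) for some e > 0.
  Covering Lambda(4r + 1) by unit cubes and stationarity give E[xi([0,1]^d) xi(Lambda(4r + 1))^q]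
  = O(r^(dq)) rho_(q+1), and the void probability of the cell must beat r^(dp): in (C1) by splitting
  at a threshold on xi(Lambda(4r + 1)) and using the Palm void bound together with rho_gamma, in
  (C2) since the cell shrunk by L is independent of the configuration outside the cell and
  large cubes are void with geometrically small probability, in (C3) since by positive association the void indicator is
  negatively correlated with the count functional and C(alpha) holds with alpha > dp.
*)

theory Submission
  imports Defs
begin

definition count_in :: "'a::euclidean_space set \<Rightarrow> 'a set \<Rightarrow> nat" where
  "count_in A \<xi> = card (\<xi> \<inter> A)"

lemma space_N_space: "space N_space = {\<xi>. locfin \<xi>}"
  unfolding N_space_def by (rule space_measure_of) auto

lemma count_in_measurable_N_space:
  assumes "bounded A" "A \<in> sets borel"
  shows "count_in A \<in> N_space \<rightarrow>\<^sub>M count_space UNIV"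
proof -
  have "count_in A -` {n} \<inter> space N_space = {\<xi>. locfin \<xi> \<and> card (\<xi> \<inter> A) = n}" for n
    by (auto simp: space_N_space count_in_def)
  moreover have "{\<xi>. locfin \<xi> \<and> card (\<xi> \<inter> A) = n} \<in> sets N_space" for n
    unfolding N_space_def by (rule in_measure_of) (use assms in auto)
  ultimately show ?thesis
    by (auto simp: measurable_count_space_eq2_countable)
qed

lemma mem_translate: "y \<in> translate x \<xi> \<longleftrightarrow> y + x \<in> \<xi>"
  unfolding translate_def by (auto simp: image_iff) (metis add_diff_cancel)

lemma translate_Int: "translate x \<xi> \<inter> B = (\<lambda>y. y - x) ` (\<xi> \<inter> (+) x ` B)"
  unfolding translate_def by (auto simp: image_iff) (metis add.commute diff_add_cancel)

lemma card_translate_Int: "card (translate x \<xi> \<inter> B) = card (\<xi> \<inter> (+) x ` B)"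
  unfolding translate_Int by (rule card_image) (auto simp: inj_on_def)

lemma locfin_translate: "locfin \<xi> \<Longrightarrow> locfin (translate x \<xi>)"
  unfolding locfin_def translate_Int by (auto intro: bounded_translation)

lemma translate_translate: "translate x (translate y \<xi>) = translate (x + y) \<xi>"
  unfolding translate_def by (auto simp: image_image algebra_simps)

lemma translate_0 [simp]: "translate 0 \<xi> = \<xi>"
  unfolding translate_def by simp

lemma translation_in_borel:
  fixes A :: "'a::euclidean_space set"
  assumes "A \<in> sets borel"
  shows "(+) v ` A \<in> sets borel"
proof -
  have "(+) v ` A = (\<lambda>y. y - v) -` A \<inter> space borel"
    by (auto simp: image_iff) (metis add.commute diff_add_cancel)
  also have "\<dots> \<in> sets borel"
    by (rule measurable_sets[OF _ assms]) measurable
  finally show ?thesis .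
qed

lemma mem_Lambda: "w \<in> Lambda l c \<longleftrightarrow> (\<forall>b\<in>Basis. c \<bullet> b - l \<le> w \<bullet> b \<and> w \<bullet> b \<le> c \<bullet> b + l)"
  unfolding Lambda_def mem_box by (simp add: inner_diff_left inner_add_left)

lemma mem_unit_cube: "x \<in> unit_cube \<longleftrightarrow> (\<forall>b\<in>Basis. 0 \<le> x \<bullet> b \<and> x \<bullet> b \<le> 1)"
  unfolding unit_cube_def mem_box by simp

lemma bounded_Lambda [intro, simp]: "bounded (Lambda l c)"
  unfolding Lambda_def by simp

lemma Lambda_in_borel [intro, simp]: "Lambda l c \<in> sets borel"
  unfolding Lambda_def by simp

lemma bounded_unit_cube [intro, simp]: "bounded unit_cube"
  unfolding unit_cube_def by simp

lemma unit_cube_in_borel [intro, simp]: "unit_cube \<in> sets borel"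
  unfolding unit_cube_def by simp

lemma Lambda_translation: "(+) g ` Lambda h 0 = Lambda h g"
  unfolding Lambda_def using cbox_translation[of g "- h *\<^sub>R One" "h *\<^sub>R One"]
  by (simp add: algebra_simps)

lemma Lambda_mono: "a \<le> b \<Longrightarrow> Lambda a g \<subseteq> Lambda b g"
  unfolding Lambda_def by (auto simp: subset_box inner_diff_left inner_add_left)

lemma unit_cube_subset_Lambda: "1 \<le> R \<Longrightarrow> unit_cube \<subseteq> Lambda R 0"
  unfolding Lambda_def unit_cube_def by (auto simp: subset_box inner_diff_left inner_add_left)

lemma translate_unit_cube_in_Lambda:
  assumes x: "x \<in> unit_cube" and y: "norm y \<le> t"
  shows "y + x \<in> Lambda (t + 1) 0"
  unfolding mem_Lambda
proof
  fix b :: 'a assume b: "b \<in> Basis"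
  have "\<bar>y \<bullet> b\<bar> \<le> t" using Basis_le_norm[OF b, of y] y by linarith
  moreover have "0 \<le> x \<bullet> b" "x \<bullet> b \<le> 1" using x b unfolding mem_unit_cube by auto
  ultimately show "0 \<bullet> b - (t + 1) \<le> (y + x) \<bullet> b \<and> (y + x) \<bullet> b \<le> 0 \<bullet> b + (t + 1)"
    by (simp add: inner_add_left abs_le_iff)
qed

definition grid_offsets :: "('a::euclidean_space \<Rightarrow> int) set" where
  "grid_offsets = (Basis::'a set) \<rightarrow>\<^sub>E {- int (3 * DIM('a)) .. int (3 * DIM('a))}"

definition grid_cell :: "real \<Rightarrow> ('a::euclidean_space \<Rightarrow> int) \<Rightarrow> 'a set" where
  "grid_cell r k = Lambda (r / real (3 * DIM('a)))
     (\<Sum>b\<in>Basis. (r / real (3 * DIM('a)) * of_int (k b)) *\<^sub>R b)"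

lemma finite_grid_offsets: "finite grid_offsets"
  unfolding grid_offsets_def by (intro finite_PiE) auto

lemma grid_cell_eq_Lambda: "\<exists>g. grid_cell r k = Lambda (r / real (3 * DIM('a))) (g::'a::euclidean_space)"
  unfolding grid_cell_def by blast

lemma abs_round_le:
  fixes y :: real
  assumes "\<bar>y\<bar> \<le> of_int M"
  shows "\<bar>round y\<bar> \<le> M"
proof -
  have "\<bar>of_int (round y) - y\<bar> \<le> 1/2" by (rule of_int_round_abs_le)
  then have "\<bar>of_int (round y)\<bar> < (of_int (M + 1) :: real)"
    using assms by linarith
  then show ?thesis by linarith
qed

lemma empty_ball_contains_empty_grid_cell:
  fixes \<xi> :: "'a::euclidean_space set"
  assumes r: "2 * real DIM('a) < r" and z: "norm z = r" and x: "x \<in> unit_cube"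
    and empty: "\<forall>v\<in>\<xi>. r \<le> dist (z + x) v"
  shows "\<exists>k\<in>grid_offsets. \<xi> \<inter> grid_cell r k = {}"
proof -
  define M :: nat where "M = 3 * DIM('a)"
  define h where "h = r / real M"
  have rpos: "r > 0" using r of_nat_0_le_iff[of "DIM('a)"] by linarith
  have hpos: "h > 0" and rM: "r = h * real M" unfolding h_def M_def using rpos by auto
  define k where "k = restrict (\<lambda>b. round (z \<bullet> b / h)) (Basis::'a set)"
  have "k \<in> grid_offsets" unfolding grid_offsets_def
  proof (rule PiE_I)
    fix b :: 'a assume b: "b \<in> Basis"
    have "\<bar>z \<bullet> b\<bar> \<le> h * real M" using Basis_le_norm[OF b, of z] z rM by simp
    then have "\<bar>z \<bullet> b / h\<bar> \<le> of_int (int M)" using hpos by (simp add: divide_le_eq mult.commute)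
    from abs_round_le[OF this] show "k b \<in> {- int (3 * DIM('a)) .. int (3 * DIM('a))}"
      using b by (simp add: k_def M_def abs_le_iff)
  qed (simp add: k_def)
  moreover define g where "g = (\<Sum>b\<in>Basis. (h * of_int (k b)) *\<^sub>R b)"
  have near: "\<bar>g \<bullet> b - z \<bullet> b\<bar> \<le> h / 2" if b: "b \<in> Basis" for b
  proof -
    have "g \<bullet> b - z \<bullet> b = h * (of_int (round (z \<bullet> b / h)) - z \<bullet> b / h)"
      using b hpos by (simp add: g_def k_def inner_sum_left_Basis algebra_simps)
    then have "\<bar>g \<bullet> b - z \<bullet> b\<bar> = h * \<bar>of_int (round (z \<bullet> b / h)) - z \<bullet> b / h\<bar>"
      using hpos by (simp add: abs_mult)
    also have "\<dots> \<le> h * (1/2)" using hpos of_int_round_abs_le by (intro mult_left_mono) auto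
    finally show ?thesis by simp
  qed
  txt \<open>Every point of the cell around \<open>g\<close> is within \<open>l\<^sub>1\<close>-distance \<open>3 d h / 2 + d = r / 2 + d < r\<close>
    of \<open>z + x\<close>.\<close>
  have "\<xi> \<inter> Lambda h g = {}"
  proof (rule ccontr)
    assume "\<xi> \<inter> Lambda h g \<noteq> {}"
    then obtain w where w: "w \<in> \<xi>" "w \<in> Lambda h g" by auto
    have "\<bar>(z + x - w) \<bullet> b\<bar> \<le> 3 / 2 * h + 1" if b: "b \<in> Basis" for b
    proof -
      have "g \<bullet> b - h \<le> w \<bullet> b" "w \<bullet> b \<le> g \<bullet> b + h" "0 \<le> x \<bullet> b" "x \<bullet> b \<le> 1"
        using w(2) x b by (auto simp: mem_Lambda mem_unit_cube)
      then show ?thesis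
        using near[OF b] unfolding abs_le_iff by (auto simp: inner_diff_left inner_add_left)
    qed
    then have "(\<Sum>b\<in>Basis. \<bar>(z + x - w) \<bullet> b\<bar>) \<le> (\<Sum>b\<in>(Basis::'a set). 3 / 2 * h + 1)"
      by (rule sum_mono)
    then have "norm (z + x - w) \<le> (\<Sum>b\<in>(Basis::'a set). 3 / 2 * h + 1)"
      using norm_le_l1[of "z + x - w"] by linarith
    also have "\<dots> = r / 2 + real DIM('a)" unfolding rM M_def by (simp add: algebra_simps)
    finally have "dist (z + x) w < r" using r by (simp add: dist_norm)
    with empty w(1) show False by force
  qed
  ultimately show ?thesis unfolding grid_cell_def g_def h_def M_def by blast
qed

section \<open>Far Delaunay neighbours force empty grid cells\<close>

lemma shrink_empty_ball:
  fixes z :: "'a::euclidean_space"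
  assumes empty: "\<forall>w\<in>\<eta>. norm z \<le> dist z w" and r: "0 < r" "r \<le> norm z"
  shows "\<exists>z'. norm z' = r \<and> (\<forall>w\<in>\<eta>. r \<le> dist z' w)"
proof -
  have nz: "norm z > 0" using r by linarith
  define z' where "z' = (r / norm z) *\<^sub>R z"
  have "z - z' = (1 - r / norm z) *\<^sub>R z" by (simp add: z'_def algebra_simps)
  then have "dist z z' = \<bar>1 - r / norm z\<bar> * norm z" by (simp add: dist_norm)
  also have "\<dots> = norm z - r" using r nz by (simp add: field_simps)
  finally have dzz': "dist z z' = norm z - r" .
  have "r \<le> dist z' w" if "w \<in> \<eta>" for w
  proof -
    have "norm z \<le> dist z w" using empty that by blast
    also have "dist z w \<le> dist z z' + dist z' w" by (rule dist_triangle)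
    finally show ?thesis using dzz' by simp
  qed
  moreover have "norm z' = r" using nz r by (simp add: z'_def)
  ultimately show ?thesis by blast
qed

lemma dt_edge_empty_ball:
  fixes \<eta> :: "'a::euclidean_space set"
  assumes "dt_edge \<eta> 0 y"
  shows "y \<in> \<eta> \<and> (\<exists>z. norm y \<le> 2 * norm z \<and> (\<forall>w\<in>\<eta>. norm z \<le> dist z w))"
proof -
  from assms obtain F where h: "0 \<in> \<eta>" "y \<in> \<eta>" "F face_of vor \<eta> 0" "F face_of vor \<eta> y"
      "aff_dim F = int DIM('a) - 1"
    unfolding dt_edge_def by auto
  have "F \<noteq> {}"
  proof
    assume "F = {}"
    with h(5) have "int DIM('a) = 0" by simp
    then show False by simp
  qed
  then obtain z where "z \<in> F" by auto
  then have z0: "z \<in> vor \<eta> 0" and zy: "z \<in> vor \<eta> y"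
    using face_of_imp_subset[OF h(3)] face_of_imp_subset[OF h(4)] by auto
  have "\<forall>w\<in>\<eta>. norm z \<le> dist z w" using z0 by (auto simp: vor_def dist_norm)
  moreover have "dist z y \<le> dist z 0" using zy h(1) by (auto simp: vor_def)
  then have "norm y \<le> 2 * norm z"
    using dist_triangle[of y 0 z] by (simp add: dist_commute dist_norm)
  ultimately show ?thesis using h(2) by blast
qed

lemma dt_far_neighbour_imp_empty_grid_cell:
  fixes \<xi> :: "'a::euclidean_space set"
  assumes y: "dt_edge (translate x \<xi>) 0 y" and r: "2 * real DIM('a) < r" and x: "x \<in> unit_cube"
    and far: "2 * r \<le> norm y"
  shows "\<exists>k\<in>grid_offsets. \<xi> \<inter> grid_cell r k = {}"
proof -
  obtain z where z: "norm y \<le> 2 * norm z" "\<forall>w\<in>translate x \<xi>. norm z \<le> dist z w"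
    using dt_edge_empty_ball[OF y] by blast
  have "0 < r" using r of_nat_0_le_iff[of "DIM('a)"] by linarith
  moreover have "r \<le> norm z" using far z(1) by linarith
  ultimately obtain z' where z': "norm z' = r" "\<forall>w\<in>translate x \<xi>. r \<le> dist z' w"
    using shrink_empty_ball[OF z(2)] by blast
  have "\<forall>v\<in>\<xi>. r \<le> dist (z' + x) v"
  proof
    fix v assume "v \<in> \<xi>"
    then have "r \<le> dist z' (v - x)" using z'(2) by (simp add: mem_translate)
    then show "r \<le> dist (z' + x) v" by (simp add: dist_norm algebra_simps)
  qed
  then show ?thesis by (rule empty_ball_contains_empty_grid_cell[OF r z'(1) x])
qed

lemma card_dt_neighbours_le_count:
  fixes \<xi> :: "'a::euclidean_space set"
  assumes "locfin \<xi>" and x: "x \<in> unit_cube"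
    and t: "\<forall>y\<in>{y. dt_edge (translate x \<xi>) 0 y}. norm y \<le> t"
  shows "card {y. dt_edge (translate x \<xi>) 0 y} \<le> count_in (Lambda (t + 1) 0) \<xi>"
proof -
  define D where "D = {y. dt_edge (translate x \<xi>) 0 y}"
  have "finite (\<xi> \<inter> Lambda (t + 1) 0)" using assms(1) unfolding locfin_def by blast
  moreover have "y + x \<in> \<xi> \<inter> Lambda (t + 1) 0" if "y \<in> D" for y
    using that dt_edge_empty_ball[of "translate x \<xi>" y] translate_unit_cube_in_Lambda[OF x] t
    unfolding D_def by (simp add: mem_translate)
  then have "(\<lambda>y. y + x) ` D \<subseteq> \<xi> \<inter> Lambda (t + 1) 0" by blast
  ultimately have "card ((\<lambda>y. y + x) ` D) \<le> card (\<xi> \<inter> Lambda (t + 1) 0)"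
    by (rule card_mono)
  moreover have "card ((\<lambda>y. y + x) ` D) = card D" by (rule card_image) (auto simp: inj_on_def)
  ultimately show ?thesis unfolding D_def count_in_def by simp
qed

lemma dyadic_bracket:
  fixes t :: real
  assumes "1 \<le> t"
  shows "\<exists>j::nat. 2 ^ j \<le> t \<and> t < 2 ^ (j + 1)"
proof -
  obtain n :: nat where "t < 2 ^ n" using real_arch_pow[of 2 t] by auto
  define m where "m = (LEAST n::nat. t < 2 ^ n)"
  have m: "t < 2 ^ m" unfolding m_def by (rule LeastI) fact
  have m0: "m \<noteq> 0" using m assms by (intro notI) simp
  have "\<not> t < 2 ^ (m - 1)" unfolding m_def by (rule not_less_Least) (use m0 m_def in simp)
  then show ?thesis using m m0 by (intro exI[of _ "m - 1"]) simp
qed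

lemma suminf_ennreal_eq_infinity:
  fixes f :: "nat \<Rightarrow> ennreal"
  assumes "\<And>N. \<exists>j\<ge>N. 1 \<le> f j"
  shows "suminf f = \<infinity>"
proof (rule ccontr)
  assume "suminf f \<noteq> \<infinity>"
  then have "suminf f < top" by (simp add: top.not_eq_extremum)
  then obtain n where n: "suminf f < of_nat n" using ennreal_Ex_less_of_nat by blast
  have "infinite {j. 1 \<le> f j}"
    unfolding infinite_nat_iff_unbounded_le using assms by blast
  then obtain B where B: "finite B" "card B = n" "B \<subseteq> {j. 1 \<le> f j}"
    using infinite_arbitrarily_large by blast
  have "of_nat n = (\<Sum>j\<in>B. (1::ennreal))" using B by simp
  also have "\<dots> \<le> sum f B" using B by (intro sum_mono) auto
  also have "\<dots> \<le> suminf f" by (rule sum_le_suminf[OF summableI B(1)]) auto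
  finally show False using n by simp
qed

definition shell_bound :: "real \<Rightarrow> real \<Rightarrow> 'a::euclidean_space set \<Rightarrow> ennreal" where
  "shell_bound p r \<xi> = (\<Sum>k\<in>grid_offsets. of_bool (count_in (grid_cell r k) \<xi> = 0) *
     ennreal (real (count_in (Lambda (4 * r + 1) 0) \<xi>) powr p))"

definition degree_majorant :: "real \<Rightarrow> real \<Rightarrow> 'a::euclidean_space set \<Rightarrow> ennreal" where
  "degree_majorant S p \<xi> =
     ennreal (real (count_in (Lambda (2 * S + 1) 0) \<xi>) powr p) + (\<Sum>j. shell_bound p (S * 2 ^ j) \<xi>)"

lemma shell_bound_ge:
  assumes "k \<in> grid_offsets" "\<xi> \<inter> grid_cell r k = {}"
  shows "ennreal (real (count_in (Lambda (4 * r + 1) 0) \<xi>) powr p) \<le> shell_bound p r \<xi>"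
  unfolding shell_bound_def using assms
  by (intro member_le_sum[of k, OF _ _ finite_grid_offsets, THEN order_trans[rotated]])
     (auto simp: count_in_def)

lemma far_dt_neighbour_shell:
  fixes \<xi> :: "'a::euclidean_space set"
  assumes y: "dt_edge (translate x \<xi>) 0 y" and x: "x \<in> unit_cube" and S: "2 * real DIM('a) < S"
    and far: "2 * S \<le> norm y"
  obtains j where "norm y < 4 * S * 2 ^ j" "\<exists>k\<in>grid_offsets. \<xi> \<inter> grid_cell (S * 2 ^ j) k = {}"
proof -
  have Spos: "0 < S" using S of_nat_0_le_iff[of "DIM('a)"] by linarith
  moreover have "1 \<le> norm y / (2 * S)" using far Spos by simp
  ultimately obtain j :: nat where j: "2 ^ j \<le> norm y / (2 * S)" "norm y / (2 * S) < 2 ^ (j + 1)"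
    using dyadic_bracket by blast
  have j1: "2 * (S * 2 ^ j) \<le> norm y" using j(1) Spos by (simp add: field_simps)
  have j2: "norm y < 4 * S * 2 ^ j" using j(2) Spos by (simp add: field_simps)
  have "S \<le> S * 2 ^ j" using Spos by simp
  then have "2 * real DIM('a) < S * 2 ^ j" using S by linarith
  from dt_far_neighbour_imp_empty_grid_cell[OF y this x j1] show ?thesis by (rule that[OF j2])
qed

lemma infinite_dt_neighbours_imp_degree_majorant_infinite:
  fixes \<xi> :: "'a::euclidean_space set"
  assumes lf: "locfin \<xi>" and xin: "x \<in> \<xi>" and x: "x \<in> unit_cube" and S: "2 * real DIM('a) < S"
    and p: "0 \<le> p" and inf: "infinite {y. dt_edge (translate x \<xi>) 0 y}"
  shows "degree_majorant S p \<xi> = \<infinity>"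
proof -
  define D where "D = {y. dt_edge (translate x \<xi>) 0 y}"
  have Spos: "0 < S" using S of_nat_0_le_iff[of "DIM('a)"] by linarith
  have "\<exists>j\<ge>N. 1 \<le> shell_bound p (S * 2 ^ j) \<xi>" for N
  proof -
    have "D \<subseteq> translate x \<xi>" unfolding D_def using dt_edge_empty_ball by blast
    moreover have "finite (translate x \<xi> \<inter> cball 0 (2 * S * 2 ^ N))"
      using locfin_translate[OF lf] unfolding locfin_def by simp
    ultimately have "finite (D \<inter> cball 0 (2 * S * 2 ^ N))"
      using finite_subset[of "D \<inter> cball 0 (2 * S * 2 ^ N)"] by blast
    then have "\<not> D \<subseteq> cball 0 (2 * S * 2 ^ N)"
      using inf unfolding D_def[symmetric] by (metis Int_absorb2)
    then obtain y where y: "y \<in> D" "2 * S * 2 ^ N < norm y" by (auto simp: subset_iff not_le)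
    moreover have "2 * S \<le> 2 * S * 2 ^ N" using Spos by simp
    ultimately have "dt_edge (translate x \<xi>) 0 y" "2 * S \<le> norm y" unfolding D_def by auto
    then obtain j where j: "norm y < 4 * S * 2 ^ j"
        and k: "\<exists>k\<in>grid_offsets. \<xi> \<inter> grid_cell (S * 2 ^ j) k = {}"
      by (rule far_dt_neighbour_shell[OF _ x S])
    have "S * 2 ^ N < S * 2 ^ (j + 1)" using y(2) j by simp
    then have "(2::real) ^ N < 2 ^ (j + 1)" using Spos by simp
    then have "N \<le> j" using power_less_imp_less_exp[of "2::real" N "j + 1"] by simp
    have "x \<in> \<xi> \<inter> Lambda (4 * (S * 2 ^ j) + 1) 0"
      using xin translate_unit_cube_in_Lambda[OF x, of 0 "4 * (S * 2 ^ j)"] Spos by simp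
    moreover have "finite (\<xi> \<inter> Lambda (4 * (S * 2 ^ j) + 1) 0)" using lf unfolding locfin_def by blast
    ultimately have "1 \<le> count_in (Lambda (4 * (S * 2 ^ j) + 1) 0) \<xi>"
      unfolding count_in_def by (metis card_0_eq empty_iff less_one not_le)
    then have "1 \<le> ennreal (real (count_in (Lambda (4 * (S * 2 ^ j) + 1) 0) \<xi>) powr p)"
      using p by (simp add: ge_one_powr_ge_zero)
    also have "\<dots> \<le> shell_bound p (S * 2 ^ j) \<xi>" using k shell_bound_ge by blast
    finally show ?thesis using \<open>N \<le> j\<close> by blast
  qed
  then show ?thesis unfolding degree_majorant_def by (simp add: suminf_ennreal_eq_infinity)
qed

lemma deg0_pow_translate_le_degree_majorant:
  fixes \<xi> :: "'a::euclidean_space set"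
  assumes lf: "locfin \<xi>" and xin: "x \<in> \<xi>" and x: "x \<in> unit_cube"
    and S: "2 * real DIM('a) < S" and p: "0 \<le> p"
  shows "deg0_pow (translate x \<xi>) p \<le> degree_majorant S p \<xi>"
proof (cases "finite {y. dt_edge (translate x \<xi>) 0 y}")
  case True
  define D where "D = {y. dt_edge (translate x \<xi>) 0 y}"
  have dp: "deg0_pow (translate x \<xi>) p = ennreal (real (card D) powr p)"
    using True unfolding deg0_pow_def D_def by simp
  have count_bound: "ennreal (real (card D) powr p) \<le> ennreal (real (count_in (Lambda (t + 1) 0) \<xi>) powr p)"
    if "\<forall>y\<in>D. norm y \<le> t" for t
    using card_dt_neighbours_le_count[OF lf x] that p unfolding D_def
    by (intro ennreal_leI powr_mono2) auto
  show ?thesis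
  proof (cases "\<forall>y\<in>D. norm y \<le> 2 * S")
    case True
    then show ?thesis
      unfolding dp degree_majorant_def by (intro add_increasing2 count_bound) auto
  next
    case False
    have finD: "finite (norm ` D)" using True unfolding D_def by simp
    moreover have "norm ` D \<noteq> {}" using False by blast
    ultimately have "Max (norm ` D) \<in> norm ` D" by (rule Max_in)
    then obtain y0 where "y0 \<in> D" "norm y0 = Max (norm ` D)" by auto
    then have y0: "y0 \<in> D" "\<forall>y\<in>D. norm y \<le> norm y0" using Max_ge[OF finD] by auto
    from False obtain y where "y \<in> D" "2 * S < norm y" by (auto simp: not_le)
    moreover from this(1) have "norm y \<le> norm y0" using y0(2) by blast
    ultimately have "2 * S \<le> norm y0" by linarith
    moreover have "dt_edge (translate x \<xi>) 0 y0" using y0(1) unfolding D_def by simp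
    ultimately obtain j where j: "norm y0 < 4 * S * 2 ^ j"
        and k: "\<exists>k\<in>grid_offsets. \<xi> \<inter> grid_cell (S * 2 ^ j) k = {}"
      using far_dt_neighbour_shell[OF _ x S] by metis
    have "ennreal (real (card D) powr p)
        \<le> ennreal (real (count_in (Lambda (4 * (S * 2 ^ j) + 1) 0) \<xi>) powr p)"
    proof (rule count_bound)
      show "\<forall>y\<in>D. norm y \<le> 4 * (S * 2 ^ j)"
      proof
        fix y assume "y \<in> D"
        then have "norm y \<le> norm y0" using y0(2) by blast
        then show "norm y \<le> 4 * (S * 2 ^ j)" using j by (simp add: mult.assoc)
      qed
    qed
    also have "\<dots> \<le> shell_bound p (S * 2 ^ j) \<xi>" using k shell_bound_ge by blast
    also have "\<dots> \<le> (\<Sum>j. shell_bound p (S * 2 ^ j) \<xi>)"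
      using sum_le_suminf[OF summableI, of "{j}" "\<lambda>j. shell_bound p (S * 2 ^ j) \<xi>"] by simp
    also have "\<dots> \<le> degree_majorant S p \<xi>" unfolding degree_majorant_def by simp
    finally show ?thesis unfolding dp .
  qed
next
  case False
  then show ?thesis using infinite_dt_neighbours_imp_degree_majorant_infinite[OF assms] by simp
qed

definition int_vec :: "('a::euclidean_space \<Rightarrow> int) \<Rightarrow> 'a" where
  "int_vec k = (\<Sum>b\<in>Basis. of_int (k b) *\<^sub>R b)"

definition cover_indices :: "real \<Rightarrow> ('a::euclidean_space \<Rightarrow> int) set" where
  "cover_indices R = (Basis::'a set) \<rightarrow>\<^sub>E {- \<lceil>R\<rceil> - 1 .. \<lceil>R\<rceil>}"

lemma finite_cover_indices: "finite (cover_indices R)"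
  unfolding cover_indices_def by (intro finite_PiE) auto

lemma Lambda_subset_unit_cube_cover:
  "Lambda R (0::'a::euclidean_space) \<subseteq> (\<Union>k\<in>cover_indices R. (+) (int_vec k) ` unit_cube)"
proof
  fix w :: 'a assume w: "w \<in> Lambda R 0"
  define k where "k = restrict (\<lambda>b. \<lfloor>w \<bullet> b\<rfloor>) (Basis::'a set)"
  have "k \<in> cover_indices R" unfolding cover_indices_def
  proof (rule PiE_I)
    fix b :: 'a assume b: "b \<in> Basis"
    have "- R \<le> w \<bullet> b" "w \<bullet> b \<le> R" using w b unfolding mem_Lambda by auto
    then show "k b \<in> {- \<lceil>R\<rceil> - 1 .. \<lceil>R\<rceil>}" using b by (simp add: k_def) linarith
  qed (simp add: k_def)
  moreover have "w - int_vec k \<in> unit_cube" unfolding mem_unit_cube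
  proof
    fix b :: 'a assume b: "b \<in> Basis"
    have "(w - int_vec k) \<bullet> b = w \<bullet> b - of_int \<lfloor>w \<bullet> b\<rfloor>"
      using b by (simp add: int_vec_def inner_diff_left inner_sum_left_Basis k_def)
    then show "0 \<le> (w - int_vec k) \<bullet> b \<and> (w - int_vec k) \<bullet> b \<le> 1" by linarith
  qed
  then have "w \<in> (+) (int_vec k) ` unit_cube" by (metis add_diff_cancel_left' add_diff_eq image_eqI)
  ultimately show "w \<in> (\<Union>k\<in>cover_indices R. (+) (int_vec k) ` unit_cube)" by blast
qed

lemma count_in_Lambda_le_sum_unit_cubes:
  fixes \<xi> :: "'a::euclidean_space set"
  assumes "locfin \<xi>"
  shows "count_in (Lambda R 0) \<xi> \<le> (\<Sum>k\<in>cover_indices R. count_in ((+) (int_vec k) ` unit_cube) \<xi>)"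
proof -
  have fin: "finite (\<xi> \<inter> (+) (int_vec k) ` unit_cube)" for k :: "'a \<Rightarrow> int"
    using assms bounded_translation[OF bounded_unit_cube] unfolding locfin_def by blast
  have "\<xi> \<inter> Lambda R 0 \<subseteq> (\<Union>k\<in>cover_indices R. \<xi> \<inter> (+) (int_vec k) ` unit_cube)"
    using Lambda_subset_unit_cube_cover by blast
  then have "card (\<xi> \<inter> Lambda R 0) \<le> card (\<Union>k\<in>cover_indices R. \<xi> \<inter> (+) (int_vec k) ` unit_cube)"
    by (rule card_mono[rotated]) (use fin finite_cover_indices in blast)
  also have "\<dots> \<le> (\<Sum>k\<in>cover_indices R. card (\<xi> \<inter> (+) (int_vec k) ` unit_cube))"
    by (rule card_UN_le[OF finite_cover_indices])
  finally show ?thesis unfolding count_in_def .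
qed

lemma card_cover_indices_powr_le:
  assumes r: "1 \<le> r" and p: "0 \<le> p"
  shows "real (card (cover_indices (4 * r + 1) :: ('a::euclidean_space \<Rightarrow> int) set)) powr p
    \<le> 14 powr (real DIM('a) * p) * r powr (real DIM('a) * p)"
proof -
  have "real (card (cover_indices (4 * r + 1) :: ('a \<Rightarrow> int) set))
      = real (nat (2 * \<lceil>4 * r + 1\<rceil> + 2)) ^ DIM('a)"
    unfolding cover_indices_def by (simp add: card_PiE add.commute)
  also have "\<dots> \<le> (14 * r) ^ DIM('a)"
    using r by (intro power_mono) linarith+
  finally have "real (card (cover_indices (4 * r + 1) :: ('a \<Rightarrow> int) set)) powr p
      \<le> ((14 * r) ^ DIM('a)) powr p"
    using p by (intro powr_mono2) auto
  also have "\<dots> = (14 * r) powr (real DIM('a) * p)"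
  proof -
    have "(14 * r) ^ DIM('a) = (14 * r) powr real DIM('a)" using r by (simp add: powr_realpow)
    then show ?thesis by (simp only: powr_powr)
  qed
  also have "\<dots> = 14 powr (real DIM('a) * p) * r powr (real DIM('a) * p)" by (rule powr_mult)
  finally show ?thesis .
qed

lemma sum_powr_le_card_powr_sum_powr:
  fixes a :: "'i \<Rightarrow> real"
  assumes K: "finite K" and a: "\<And>k. k \<in> K \<Longrightarrow> 0 \<le> a k" and s: "1 \<le> s"
  shows "(\<Sum>k\<in>K. a k) powr s \<le> real (card K) powr (s - 1) * (\<Sum>k\<in>K. a k powr s)"
proof -
  define K' where "K' = {k\<in>K. 0 < a k}"
  have K'K: "K' \<subseteq> K" unfolding K'_def by auto
  have finK': "finite K'" using K K'K finite_subset by blast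
  have sum1: "(\<Sum>k\<in>K. a k) = (\<Sum>k\<in>K'. a k)"
    unfolding K'_def using K a by (intro sum.mono_neutral_right) force+
  have sum2: "(\<Sum>k\<in>K. a k powr s) = (\<Sum>k\<in>K'. a k powr s)"
    unfolding K'_def using K a by (intro sum.mono_neutral_right) force+
  show ?thesis
  proof (cases "K' = {}")
    case True
    then show ?thesis unfolding sum1 sum2 by simp
  next
    case False
    define n where "n = real (card K')"
    have npos: "n > 0" unfolding n_def using finK' False by (simp add: card_gt_0_iff)
    from convex_on_sum[OF finK' False powr_convex[OF s], of "\<lambda>_. 1 / n" a]
    have "(\<Sum>k\<in>K'. (1 / n) *\<^sub>R a k) powr s \<le> (\<Sum>k\<in>K'. (1 / n) * a k powr s)"
      using npos unfolding n_def by (auto simp: K'_def)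
    then have "((\<Sum>k\<in>K'. a k) / n) powr s \<le> (\<Sum>k\<in>K'. a k powr s) / n"
      by (simp add: sum_distrib_left[symmetric] sum_divide_distrib[symmetric])
    then have "(\<Sum>k\<in>K'. a k) powr s / n powr s \<le> (\<Sum>k\<in>K'. a k powr s) / n"
      by (simp add: powr_divide sum_nonneg K'_def)
    then have "(\<Sum>k\<in>K'. a k) powr s \<le> (\<Sum>k\<in>K'. a k powr s) / n * n powr s"
      using npos by (simp add: pos_divide_le_eq)
    also have "\<dots> = n powr (s - 1) * (\<Sum>k\<in>K'. a k powr s)"
      using npos by (simp add: powr_diff field_simps)
    also have "\<dots> \<le> real (card K) powr (s - 1) * (\<Sum>k\<in>K'. a k powr s)"
      using npos s card_mono[OF K K'K] unfolding n_def
      by (intro mult_right_mono powr_mono2) (auto intro: sum_nonneg)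
    finally show ?thesis unfolding sum1 sum2 .
  qed
qed

lemma mult_powr_le_add_powr:
  fixes c a s :: real
  assumes "0 \<le> c" "0 \<le> a" "0 \<le> s"
  shows "c * a powr s \<le> c powr (s + 1) + a powr (s + 1)"
proof -
  have Suc_powr: "x powr (s + 1) = x * x powr s" if "0 \<le> x" for x :: real
    using that by (cases "x = 0") (auto simp: powr_add)
  show ?thesis
  proof (cases "c \<le> a")
    case True
    then have "c * a powr s \<le> a * a powr s" using assms by (intro mult_right_mono) auto
    then show ?thesis unfolding Suc_powr[OF assms(1)] Suc_powr[OF assms(2)]
      using assms by (simp add: add_increasing)
  next
    case False
    then have "c * a powr s \<le> c * c powr s" using assms by (intro mult_left_mono powr_mono2) auto
    then show ?thesis unfolding Suc_powr[OF assms(1)] Suc_powr[OF assms(2)]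
      using assms by (simp add: add_increasing2)
  qed
qed

definition cube_count :: "'a::euclidean_space set \<Rightarrow> ennreal" where
  "cube_count \<xi> = ennreal (real (count_in unit_cube \<xi>))"

text \<open>Covering \<open>\<Lambda>\<^sub>R\<close> by unit cubes, the power mean inequality and
  \<open>c a\<^sup>s \<le> c\<^sup>s\<^sup>+\<^sup>1 + a\<^sup>s\<^sup>+\<^sup>1\<close> bound the mixed moment by single-cube moments,
  each equal to \<open>\<rho>\<^sub>s\<^sub>+\<^sub>1\<close> by stationarity.\<close>
lemma cube_count_mult_powr_le:
  fixes \<xi> :: "'a::euclidean_space set" and R :: real
  assumes "locfin \<xi>" and s: "1 \<le> s"
  defines "a k \<equiv> real (count_in ((+) (int_vec k) ` unit_cube) \<xi>)"
    and "c \<equiv> real (count_in unit_cube \<xi>)"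
    and "n \<equiv> real (card (cover_indices R :: ('a \<Rightarrow> int) set))"
  shows "cube_count \<xi> * ennreal (real (count_in (Lambda R 0) \<xi>) powr s)
    \<le> ennreal (n powr (s - 1)) * (\<Sum>k\<in>cover_indices R. ennreal (c powr (s + 1)) + ennreal (a k powr (s + 1)))"
proof -
  have "real (count_in (Lambda R 0) \<xi>) \<le> (\<Sum>k\<in>cover_indices R. a k)"
    using count_in_Lambda_le_sum_unit_cubes[OF assms(1)] unfolding a_def by (simp flip: of_nat_sum)
  then have "real (count_in (Lambda R 0) \<xi>) powr s \<le> (\<Sum>k\<in>cover_indices R. a k) powr s"
    using s by (intro powr_mono2) auto
  also have "\<dots> \<le> n powr (s - 1) * (\<Sum>k\<in>cover_indices R. a k powr s)"
    unfolding n_def by (rule sum_powr_le_card_powr_sum_powr[OF finite_cover_indices _ s]) (simp add: a_def)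
  finally have "c * real (count_in (Lambda R 0) \<xi>) powr s \<le> c * (n powr (s - 1) * (\<Sum>k\<in>cover_indices R. a k powr s))"
    by (intro mult_left_mono) (auto simp: c_def)
  also have "\<dots> = n powr (s - 1) * (\<Sum>k\<in>cover_indices R. c * a k powr s)"
    by (simp add: sum_distrib_left ac_simps)
  also have "\<dots> \<le> n powr (s - 1) * (\<Sum>k\<in>cover_indices R. c powr (s + 1) + a k powr (s + 1))"
    using s by (intro mult_left_mono sum_mono mult_powr_le_add_powr) (auto simp: a_def c_def)
  finally have "ennreal (c * real (count_in (Lambda R 0) \<xi>) powr s) \<le>
      ennreal (n powr (s - 1) * (\<Sum>k\<in>cover_indices R. c powr (s + 1) + a k powr (s + 1)))"
    by (rule ennreal_leI)
  also have "\<dots> = ennreal (n powr (s - 1)) * (\<Sum>k\<in>cover_indices R. ennreal (c powr (s + 1)) + ennreal (a k powr (s + 1)))"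
    by (simp add: ennreal_mult sum_nonneg ennreal_plus[symmetric] del: ennreal_plus)
  finally show ?thesis
    by (simp add: cube_count_def c_def ennreal_mult[symmetric])
qed

locale stationary_point_process =
  fixes P :: "'a::euclidean_space set measure"
  assumes prob: "prob_space P"
    and sets_P: "sets P = sets N_space"
    and stationary_P: "stationary P"
begin

sublocale prob_space P by (rule prob)

lemma space_P: "space P = {\<xi>. locfin \<xi>}"
  using sets_eq_imp_space_eq[OF sets_P] space_N_space by simp

lemma finite_Int_bounded: "\<xi> \<in> space P \<Longrightarrow> bounded A \<Longrightarrow> finite (\<xi> \<inter> A)"
  by (auto simp: space_P locfin_def)

lemma count_in_eq_0_iff: "\<xi> \<in> space P \<Longrightarrow> bounded A \<Longrightarrow> count_in A \<xi> = 0 \<longleftrightarrow> \<xi> \<inter> A = {}"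
  using finite_Int_bounded by (simp add: count_in_def)

lemma count_in_measurable:
  "bounded A \<Longrightarrow> A \<in> sets borel \<Longrightarrow> count_in A \<in> P \<rightarrow>\<^sub>M count_space UNIV"
  using count_in_measurable_N_space measurable_cong_sets[OF sets_P refl] by blast

lemma borel_measurable_count_in:
  "bounded A \<Longrightarrow> A \<in> sets borel \<Longrightarrow> (\<lambda>\<xi>. g (count_in A \<xi>)) \<in> borel_measurable P"
  by (rule measurable_compose[OF count_in_measurable]) simp_all

lemma cube_count_measurable: "cube_count \<in> borel_measurable P"
  unfolding cube_count_def by (rule borel_measurable_count_in) simp_all

lemma sets_count_in_eq:
  "bounded A \<Longrightarrow> A \<in> sets borel \<Longrightarrow> {\<xi>\<in>space P. count_in A \<xi> = n} \<in> sets P"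
  using measurable_sets[OF count_in_measurable, of A "{n}"] by (simp add: vimage_def Int_def conj_commute)

lemma nn_integral_void:
  assumes "bounded B" "B \<in> sets borel"
  shows "(\<integral>\<^sup>+\<xi>. of_bool (count_in B \<xi> = 0) \<partial>P) = ennreal (prob {\<xi>\<in>space P. count_in B \<xi> = 0})"
proof -
  have "(\<integral>\<^sup>+\<xi>. of_bool (count_in B \<xi> = 0) \<partial>P) = (\<integral>\<^sup>+\<xi>. indicator {\<xi>\<in>space P. count_in B \<xi> = 0} \<xi> \<partial>P)"
    by (rule nn_integral_cong) (simp add: indicator_def)
  also have "\<dots> = emeasure P {\<xi>\<in>space P. count_in B \<xi> = 0}"
    by (rule nn_integral_indicator[OF sets_count_in_eq[OF assms]])
  finally show ?thesis by (simp add: emeasure_eq_measure)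
qed

lemma distr_count_in_translation:
  assumes A: "bounded A" "A \<in> sets borel"
  shows "distr P (count_space UNIV) (count_in ((+) v ` A)) = distr P (count_space UNIV) (count_in A)"
proof (rule measure_eqI_countable[where A=UNIV])
  fix n :: nat
  have B: "bounded ((+) v ` A)" "(+) v ` A \<in> sets borel"
    using A by (auto intro: bounded_translation translation_in_borel)
  define S where "S = count_in ((+) v ` A) -` {n} \<inter> space P"
  have S: "S \<in> sets P" unfolding S_def
    by (rule measurable_sets[OF count_in_measurable[OF B]]) auto
  have "translate v ` S = count_in A -` {n} \<inter> space P"
  proof (intro equalityI subsetI)
    fix \<eta> assume "\<eta> \<in> translate v ` S"
    then show "\<eta> \<in> count_in A -` {n} \<inter> space P"
      by (auto simp: S_def space_P locfin_translate count_in_def card_translate_Int)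
  next
    fix \<eta> assume \<eta>: "\<eta> \<in> count_in A -` {n} \<inter> space P"
    have "translate (-v) \<eta> \<in> S"
      using \<eta> by (auto simp: S_def space_P locfin_translate count_in_def card_translate_Int image_image)
    moreover have "\<eta> = translate v (translate (-v) \<eta>)" by (simp add: translate_translate)
    ultimately show "\<eta> \<in> translate v ` S" by blast
  qed
  moreover have "measure P (translate v ` S) = measure P S"
    using stationary_P S by (auto simp: stationary_def)
  ultimately have "emeasure P (count_in A -` {n} \<inter> space P) = emeasure P S"
    by (simp add: emeasure_eq_measure)
  then show "emeasure (distr P (count_space UNIV) (count_in ((+) v ` A))) {n} =
      emeasure (distr P (count_space UNIV) (count_in A)) {n}"
    using count_in_measurable[OF A] count_in_measurable[OF B]
    by (simp add: emeasure_distr S_def)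
qed auto

lemma nn_integral_count_in_translation:
  assumes A: "bounded A" "A \<in> sets borel"
  shows "(\<integral>\<^sup>+\<xi>. g (count_in ((+) v ` A) \<xi>) \<partial>P) = (\<integral>\<^sup>+\<xi>. g (count_in A \<xi>) \<partial>P)"
proof -
  have B: "bounded ((+) v ` A)" "(+) v ` A \<in> sets borel"
    using A by (auto intro: bounded_translation translation_in_borel)
  have "(\<integral>\<^sup>+\<xi>. g (count_in ((+) v ` A) \<xi>) \<partial>P) = (\<integral>\<^sup>+n. g n \<partial>distr P (count_space UNIV) (count_in ((+) v ` A)))"
    by (rule nn_integral_distr[symmetric]) (auto intro: count_in_measurable[OF B])
  also have "\<dots> = (\<integral>\<^sup>+\<xi>. g (count_in A \<xi>) \<partial>P)"
    by (simp add: distr_count_in_translation[OF A] nn_integral_distr count_in_measurable[OF A])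
  finally show ?thesis .
qed

lemma prob_void_Lambda:
  "prob {\<xi>\<in>space P. count_in (Lambda h g) \<xi> = 0} = prob {\<xi>\<in>space P. \<xi> \<inter> Lambda h 0 = {}}"
proof -
  have "ennreal (prob {\<xi>\<in>space P. count_in (Lambda h g) \<xi> = 0})
      = (\<integral>\<^sup>+\<xi>. of_bool (count_in ((+) g ` Lambda h 0) \<xi> = 0) \<partial>P)"
    by (simp add: nn_integral_void Lambda_translation)
  also have "\<dots> = ennreal (prob {\<xi>\<in>space P. count_in (Lambda h 0) \<xi> = 0})"
    using nn_integral_count_in_translation[of "Lambda h 0" "\<lambda>n. of_bool (n = 0)" g]
    by (simp add: nn_integral_void)
  also have "{\<xi>\<in>space P. count_in (Lambda h 0) \<xi> = 0} = {\<xi>\<in>space P. \<xi> \<inter> Lambda h 0 = {}}"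
    by (auto simp: count_in_eq_0_iff)
  finally show ?thesis by simp
qed

lemma rho_translated_unit_cube:
  "(\<integral>\<^sup>+\<xi>. ennreal (real (count_in ((+) v ` unit_cube) \<xi>) powr s) \<partial>P) = rho P s"
  using nn_integral_count_in_translation[of unit_cube "\<lambda>n. ennreal (real n powr s)" v]
  by (simp add: rho_def count_in_def)

lemma rho_mono:
  assumes "1 \<le> a" "a \<le> b"
  shows "rho P a \<le> rho P b"
  unfolding rho_def
proof (rule nn_integral_mono)
  fix \<xi> :: "'a set"
  show "ennreal (real (card (\<xi> \<inter> unit_cube)) powr a) \<le> ennreal (real (card (\<xi> \<inter> unit_cube)) powr b)"
  proof (cases "card (\<xi> \<inter> unit_cube) = 0")
    case False
    then have "1 \<le> real (card (\<xi> \<inter> unit_cube))" by simp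
    then show ?thesis using assms by (intro ennreal_leI powr_mono) auto
  qed simp
qed

lemma cube_count_moment_le:
  assumes s: "1 \<le> s"
  shows "(\<integral>\<^sup>+\<xi>. cube_count \<xi> * ennreal (real (count_in (Lambda R 0) \<xi>) powr s) \<partial>P)
     \<le> ennreal (2 * real (card (cover_indices R :: ('a \<Rightarrow> int) set)) powr s) * rho P (s + 1)"
proof -
  define K :: "('a \<Rightarrow> int) set" where "K = cover_indices R"
  define n where "n = real (card K)"
  define a :: "('a \<Rightarrow> int) \<Rightarrow> 'a set \<Rightarrow> real"
    where "a k \<xi> = real (count_in ((+) (int_vec k) ` unit_cube) \<xi>)" for k \<xi>
  define c where "c \<xi> = real (count_in unit_cube \<xi>)" for \<xi> :: "'a set"
  have ma: "(\<lambda>\<xi>. ennreal (a k \<xi> powr (s + 1))) \<in> borel_measurable P" for k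
    unfolding a_def by (intro borel_measurable_count_in bounded_translation translation_in_borel) simp_all
  have mc: "(\<lambda>\<xi>. ennreal (c \<xi> powr (s + 1))) \<in> borel_measurable P"
    unfolding c_def by (intro borel_measurable_count_in) simp_all
  have "(\<integral>\<^sup>+\<xi>. cube_count \<xi> * ennreal (real (count_in (Lambda R 0) \<xi>) powr s) \<partial>P) \<le>
      (\<integral>\<^sup>+\<xi>. ennreal (n powr (s - 1)) * (\<Sum>k\<in>K. ennreal (c \<xi> powr (s + 1)) + ennreal (a k \<xi> powr (s + 1))) \<partial>P)"
    using cube_count_mult_powr_le[OF _ s] unfolding K_def n_def a_def c_def
    by (intro nn_integral_mono) (simp add: space_P)
  also have "\<dots> = ennreal (n powr (s - 1)) * (\<Sum>k\<in>K. (\<integral>\<^sup>+\<xi>. ennreal (c \<xi> powr (s + 1)) \<partial>P) + (\<integral>\<^sup>+\<xi>. ennreal (a k \<xi> powr (s + 1)) \<partial>P))"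
    using ma mc by (simp add: nn_integral_cmult nn_integral_sum nn_integral_add borel_measurable_sum)
  also have "\<dots> = ennreal (n powr (s - 1)) * (\<Sum>k\<in>K. rho P (s + 1) + rho P (s + 1))"
    unfolding a_def c_def rho_translated_unit_cube by (simp add: rho_def count_in_def)
  also have "\<dots> = ennreal (n powr (s - 1)) * (ennreal n * (2 * rho P (s + 1)))"
    by (simp add: n_def ennreal_of_nat_eq_real_of_nat mult_2)
  also have "\<dots> = ennreal (2 * n powr s) * rho P (s + 1)"
  proof (cases "n = 0")
    case False
    then have eq: "n powr (s - 1) * n * 2 = 2 * n powr s" by (simp add: powr_diff n_def)
    have "ennreal (n powr (s - 1)) * (ennreal n * (2 * rho P (s + 1)))
        = ennreal (n powr (s - 1) * n * 2) * rho P (s + 1)"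
      by (simp add: ennreal_mult n_def mult.assoc)
    then show ?thesis unfolding eq .
  qed (simp add: n_def)
  finally show ?thesis unfolding n_def K_def .
qed

lemma cube_count_moment_le_powr:
  assumes s: "1 \<le> s" and r: "1 \<le> r"
  shows "(\<integral>\<^sup>+\<xi>. cube_count \<xi> * ennreal (real (count_in (Lambda (4 * r + 1) 0) \<xi>) powr s) \<partial>P)
     \<le> ennreal (2 * 14 powr (real DIM('a) * s) * r powr (real DIM('a) * s)) * rho P (s + 1)"
proof -
  have "2 * real (card (cover_indices (4 * r + 1) :: ('a \<Rightarrow> int) set)) powr s
      \<le> 2 * 14 powr (real DIM('a) * s) * r powr (real DIM('a) * s)"
    using card_cover_indices_powr_le[OF r, of s, where 'a='a] s by simp
  then show ?thesis
    using cube_count_moment_le[OF s, of "4 * r + 1"]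
    by (meson ennreal_leI mult_right_mono order_trans zero_le)
qed

lemma cube_count_moment_finite:
  "1 \<le> s \<Longrightarrow> rho P (s + 1) < \<infinity> \<Longrightarrow>
    (\<integral>\<^sup>+\<xi>. cube_count \<xi> * ennreal (real (count_in (Lambda R 0) \<xi>) powr s) \<partial>P) < \<infinity>"
  using cube_count_moment_le[of s R] by (auto simp: ennreal_mult_less_top le_less_trans)

lemma shell_bound_measurable: "shell_bound p r \<in> borel_measurable P"
  unfolding shell_bound_def
  by (intro borel_measurable_sum borel_measurable_times_ennreal borel_measurable_count_in)
     (auto simp: grid_cell_def)

lemma palm_exp_deg0_pow_le:
  assumes S: "2 * real DIM('a) < S" and p: "0 \<le> p"
  shows "palm_exp P (\<lambda>\<xi>. deg0_pow \<xi> p) \<le> ennreal (1 / intensity P) *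
     ((\<integral>\<^sup>+\<xi>. cube_count \<xi> * ennreal (real (count_in (Lambda (2 * S + 1) 0) \<xi>) powr p) \<partial>P) +
      (\<Sum>j. \<Sum>k\<in>grid_offsets. \<integral>\<^sup>+\<xi>. cube_count \<xi> * of_bool (count_in (grid_cell (S * 2 ^ j) k) \<xi> = 0) *
         ennreal (real (count_in (Lambda (4 * (S * 2 ^ j) + 1) 0) \<xi>) powr p) \<partial>P))"
proof -
  have "(\<integral>\<^sup>+\<xi>. (\<Sum>x\<in>\<xi> \<inter> unit_cube. deg0_pow (translate x \<xi>) p) \<partial>P)
      \<le> (\<integral>\<^sup>+\<xi>. cube_count \<xi> * degree_majorant S p \<xi> \<partial>P)"
  proof (rule nn_integral_mono)
    fix \<xi> assume "\<xi> \<in> space P"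
    then have "(\<Sum>x\<in>\<xi> \<inter> unit_cube. deg0_pow (translate x \<xi>) p) \<le> (\<Sum>x\<in>\<xi> \<inter> unit_cube. degree_majorant S p \<xi>)"
      by (intro sum_mono deg0_pow_translate_le_degree_majorant[OF _ _ _ S p]) (auto simp: space_P)
    then show "(\<Sum>x\<in>\<xi> \<inter> unit_cube. deg0_pow (translate x \<xi>) p) \<le> cube_count \<xi> * degree_majorant S p \<xi>"
      by (simp add: cube_count_def count_in_def ennreal_of_nat_eq_real_of_nat)
  qed
  also have "\<dots> = (\<integral>\<^sup>+\<xi>. cube_count \<xi> * ennreal (real (count_in (Lambda (2 * S + 1) 0) \<xi>) powr p) \<partial>P) +
      (\<integral>\<^sup>+\<xi>. (\<Sum>j. cube_count \<xi> * shell_bound p (S * 2 ^ j) \<xi>) \<partial>P)"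
    unfolding degree_majorant_def distrib_left ennreal_suminf_cmult[symmetric]
    by (intro nn_integral_add borel_measurable_suminf_order borel_measurable_times_ennreal
        cube_count_measurable shell_bound_measurable borel_measurable_count_in) simp_all
  also have "(\<integral>\<^sup>+\<xi>. (\<Sum>j. cube_count \<xi> * shell_bound p (S * 2 ^ j) \<xi>) \<partial>P) =
      (\<Sum>j. \<integral>\<^sup>+\<xi>. cube_count \<xi> * shell_bound p (S * 2 ^ j) \<xi> \<partial>P)"
    by (intro nn_integral_suminf borel_measurable_times_ennreal cube_count_measurable shell_bound_measurable)
  also have "(\<lambda>j. \<integral>\<^sup>+\<xi>. cube_count \<xi> * shell_bound p (S * 2 ^ j) \<xi> \<partial>P) =
      (\<lambda>j. \<Sum>k\<in>grid_offsets. \<integral>\<^sup>+\<xi>. cube_count \<xi> * of_bool (count_in (grid_cell (S * 2 ^ j) k) \<xi> = 0) *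
         ennreal (real (count_in (Lambda (4 * (S * 2 ^ j) + 1) 0) \<xi>) powr p) \<partial>P)"
    unfolding shell_bound_def sum_distrib_left mult.assoc
    by (intro ext nn_integral_sum borel_measurable_times_ennreal cube_count_measurable
        borel_measurable_count_in) (auto simp: grid_cell_def)
  finally show ?thesis unfolding palm_exp_def by (rule mult_left_mono) simp
qed

lemma summable_dyadic_powr:
  fixes S e C :: real
  assumes "0 < S" "0 < e"
  shows "summable (\<lambda>j::nat. C * (S * 2 ^ j) powr (- e))"
proof -
  have "(S * 2 ^ j) powr (- e) = S powr (- e) * (2 powr (- e)) ^ j" for j :: nat
    by (simp add: powr_mult powr_realpow[symmetric] powr_powr mult.commute powr_power)
  moreover have "summable (\<lambda>j::nat. ((2::real) powr (- e)) ^ j)"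
    using assms by (intro summable_geometric) (simp add: powr_less_one)
  ultimately show ?thesis by (simp add: mult.assoc summable_mult)
qed

lemma palm_deg0_pow_finite_if_void_moments_decay:
  fixes S e C :: real
  assumes p: "1 \<le> p" and m: "0 < intensity P" and rho: "rho P (p + 1) < \<infinity>"
    and S: "2 * real DIM('a) < S" and e: "0 < e" and C: "0 \<le> C"
    and decay: "\<And>r g. S \<le> r \<Longrightarrow>
      (\<integral>\<^sup>+\<xi>. cube_count \<xi> * of_bool (count_in (Lambda (r / real (3 * DIM('a))) g) \<xi> = 0) *
         ennreal (real (count_in (Lambda (4 * r + 1) 0) \<xi>) powr p) \<partial>P) \<le> ennreal (C * r powr (- e))"
  shows "palm_exp P (\<lambda>\<xi>. deg0_pow \<xi> p) < \<infinity>"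
proof -
  have Spos: "0 < S" using S of_nat_0_le_iff[of "DIM('a)"] by linarith
  define n where "n = real (card (grid_offsets :: ('a \<Rightarrow> int) set))"
  define b where "b j = n * (C * (S * 2 ^ j) powr (- e))" for j :: nat
  have "(\<Sum>k\<in>grid_offsets. \<integral>\<^sup>+\<xi>. cube_count \<xi> * of_bool (count_in (grid_cell (S * 2 ^ j) k) \<xi> = 0) *
         ennreal (real (count_in (Lambda (4 * (S * 2 ^ j) + 1) 0) \<xi>) powr p) \<partial>P) \<le> ennreal (b j)" for j
  proof -
    have "S \<le> S * 2 ^ j" using Spos by simp
    have "(\<Sum>k\<in>grid_offsets. \<integral>\<^sup>+\<xi>. cube_count \<xi> * of_bool (count_in (grid_cell (S * 2 ^ j) k) \<xi> = 0) *
         ennreal (real (count_in (Lambda (4 * (S * 2 ^ j) + 1) 0) \<xi>) powr p) \<partial>P)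
        \<le> (\<Sum>k\<in>(grid_offsets :: ('a \<Rightarrow> int) set). ennreal (C * (S * 2 ^ j) powr (- e)))"
    proof (rule sum_mono)
      fix k :: "'a \<Rightarrow> int"
      obtain g where "grid_cell (S * 2 ^ j) k = Lambda (S * 2 ^ j / real (3 * DIM('a))) g"
        using grid_cell_eq_Lambda by blast
      then show "(\<integral>\<^sup>+\<xi>. cube_count \<xi> * of_bool (count_in (grid_cell (S * 2 ^ j) k) \<xi> = 0) *
          ennreal (real (count_in (Lambda (4 * (S * 2 ^ j) + 1) 0) \<xi>) powr p) \<partial>P)
          \<le> ennreal (C * (S * 2 ^ j) powr (- e))"
        using decay[OF \<open>S \<le> S * 2 ^ j\<close>, of g] by simp
    qed
    also have "\<dots> = ennreal (b j)" unfolding b_def n_def using C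
      by (simp add: ennreal_mult ennreal_of_nat_eq_real_of_nat)
    finally show ?thesis .
  qed
  then have "(\<Sum>j. \<Sum>k\<in>grid_offsets. \<integral>\<^sup>+\<xi>. cube_count \<xi> * of_bool (count_in (grid_cell (S * 2 ^ j) k) \<xi> = 0) *
         ennreal (real (count_in (Lambda (4 * (S * 2 ^ j) + 1) 0) \<xi>) powr p) \<partial>P) \<le> (\<Sum>j. ennreal (b j))"
    by (intro suminf_le) auto
  also have "\<dots> = ennreal (\<Sum>j. b j)"
  proof (rule suminf_ennreal2)
    show "\<And>j. 0 \<le> b j" unfolding b_def n_def using C by simp
    show "summable b" unfolding b_def by (rule summable_mult[OF summable_dyadic_powr[OF Spos e]])
  qed
  finally have shells: "(\<Sum>j. \<Sum>k\<in>grid_offsets. \<integral>\<^sup>+\<xi>. cube_count \<xi> * of_bool (count_in (grid_cell (S * 2 ^ j) k) \<xi> = 0) *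
         ennreal (real (count_in (Lambda (4 * (S * 2 ^ j) + 1) 0) \<xi>) powr p) \<partial>P) < \<infinity>"
    using le_less_trans by fastforce
  moreover have "(\<integral>\<^sup>+\<xi>. cube_count \<xi> * ennreal (real (count_in (Lambda (2 * S + 1) 0) \<xi>) powr p) \<partial>P) < \<infinity>"
    by (rule cube_count_moment_finite[OF p rho])
  ultimately have "ennreal (1 / intensity P) *
     ((\<integral>\<^sup>+\<xi>. cube_count \<xi> * ennreal (real (count_in (Lambda (2 * S + 1) 0) \<xi>) powr p) \<partial>P) +
      (\<Sum>j. \<Sum>k\<in>grid_offsets. \<integral>\<^sup>+\<xi>. cube_count \<xi> * of_bool (count_in (grid_cell (S * 2 ^ j) k) \<xi> = 0) *
         ennreal (real (count_in (Lambda (4 * (S * 2 ^ j) + 1) 0) \<xi>) powr p) \<partial>P)) < \<infinity>"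
    by (simp add: ennreal_mult_less_top)
  moreover have "0 \<le> p" using p by simp
  ultimately show ?thesis using palm_exp_deg0_pow_le[OF S] le_less_trans by blast
qed

lemma palm_deg0_pow_finite_if_void_prob_decay:
  fixes S \<alpha> \<kappa> :: real
  assumes p: "1 \<le> p" and m: "0 < intensity P" and rho: "rho P (p + 1) < \<infinity>"
    and S: "2 * real DIM('a) < S" and \<alpha>: "real DIM('a) * p < \<alpha>" and \<kappa>: "0 \<le> \<kappa>"
    and decoupled: "\<And>r g. S \<le> r \<Longrightarrow>
      (\<integral>\<^sup>+\<xi>. cube_count \<xi> * of_bool (count_in (Lambda (r / real (3 * DIM('a))) g) \<xi> = 0) *
         ennreal (real (count_in (Lambda (4 * r + 1) 0) \<xi>) powr p) \<partial>P)
      \<le> (\<integral>\<^sup>+\<xi>. cube_count \<xi> * ennreal (real (count_in (Lambda (4 * r + 1) 0) \<xi>) powr p) \<partial>P) *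
         ennreal (\<kappa> * r powr (- \<alpha>))"
  shows "palm_exp P (\<lambda>\<xi>. deg0_pow \<xi> p) < \<infinity>"
proof -
  define d where "d = real DIM('a)"
  obtain \<rho> where \<rho>: "rho P (p + 1) = ennreal \<rho>" "0 \<le> \<rho>" using rho by (cases "rho P (p + 1)") auto
  define C where "C = 2 * 14 powr (d * p) * \<rho> * \<kappa>"
  show ?thesis
  proof (rule palm_deg0_pow_finite_if_void_moments_decay[OF p m rho S, of "\<alpha> - d * p" C])
    show "0 < \<alpha> - d * p" using \<alpha> unfolding d_def by simp
    show "0 \<le> C" unfolding C_def using \<rho> \<kappa> by simp
    fix r g assume "S \<le> r"
    then have r: "1 \<le> r" using S DIM_positive[where 'a='a] by linarith
    have "(\<integral>\<^sup>+\<xi>. cube_count \<xi> * of_bool (count_in (Lambda (r / real (3 * DIM('a))) g) \<xi> = 0) *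
          ennreal (real (count_in (Lambda (4 * r + 1) 0) \<xi>) powr p) \<partial>P)
        \<le> (\<integral>\<^sup>+\<xi>. cube_count \<xi> * ennreal (real (count_in (Lambda (4 * r + 1) 0) \<xi>) powr p) \<partial>P) *
          ennreal (\<kappa> * r powr (- \<alpha>))"
      using \<open>S \<le> r\<close> by (rule decoupled)
    also have "\<dots> \<le> (ennreal (2 * 14 powr (d * p) * r powr (d * p)) * ennreal \<rho>) * ennreal (\<kappa> * r powr (- \<alpha>))"
      using cube_count_moment_le_powr[of p r] p r \<rho> unfolding d_def by (intro mult_right_mono) auto
    also have "\<dots> = ennreal (C * (r powr (d * p) * r powr (- \<alpha>)))"
      using \<rho>(2) \<kappa> by (simp add: C_def ennreal_mult[symmetric] mult_ac)
    also have "r powr (d * p) * r powr (- \<alpha>) = r powr (- (\<alpha> - d * p))"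
      by (simp add: powr_add[symmetric])
    finally show "(\<integral>\<^sup>+\<xi>. cube_count \<xi> * of_bool (count_in (Lambda (r / real (3 * DIM('a))) g) \<xi> = 0) *
          ennreal (real (count_in (Lambda (4 * r + 1) 0) \<xi>) powr p) \<partial>P) \<le> ennreal (C * r powr (- (\<alpha> - d * p)))" .
  qed
qed

end

section \<open>Decay of the void probabilities: case (C1)\<close>

lemma of_bool_mult_powr_le:
  fixes X t p \<beta> :: real
  assumes X: "0 \<le> X" and t: "0 < t" and p: "0 \<le> p" and \<beta>: "0 < \<beta>"
  shows "of_bool b * X powr p \<le> t powr p * of_bool b + t powr (- \<beta>) * X powr (p + \<beta>)"
proof (cases "X \<le> t")
  case True
  then have "X powr p \<le> t powr p" using X p by (intro powr_mono2) auto
  then show ?thesis by (cases b) (auto intro: add_increasing2)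
next
  case False
  then have "X powr (- \<beta>) \<le> t powr (- \<beta>)" using t \<beta> by (intro powr_mono2') auto
  then have "X powr (p + \<beta>) * X powr (- \<beta>) \<le> X powr (p + \<beta>) * t powr (- \<beta>)"
    by (intro mult_left_mono) auto
  then have "X powr p \<le> t powr (- \<beta>) * X powr (p + \<beta>)" by (simp add: powr_add[symmetric] mult.commute)
  then show ?thesis by (cases b) (auto intro: add_increasing)
qed

lemma exists_split_exponent:
  fixes p \<beta> G \<alpha> :: real
  assumes p: "0 < p" and \<beta>: "0 < \<beta>" and G: "p * G / \<beta> < \<alpha>"
  shows "\<exists>b e. 0 < e \<and> b * p - \<alpha> \<le> - e \<and> G - b * \<beta> \<le> - e"
proof -
  define b where "b = (G / \<beta> + \<alpha> / p) / 2"
  have "G / \<beta> < \<alpha> / p" using G p \<beta> by (simp add: field_simps)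
  then have "0 < \<alpha> - b * p" "0 < b * \<beta> - G"
    using p \<beta> unfolding b_def by (simp_all add: field_simps)
  then show ?thesis by (intro exI[of _ b] exI[of _ "min (\<alpha> - b * p) (b * \<beta> - G)"]) auto
qed

lemma divide_powr_uminus:
  fixes r c a :: real
  assumes "0 < r" "0 < c"
  shows "(r / c) powr (- a) = c powr a * r powr (- a)"
proof -
  have "(r / c) powr (- a) = r powr (- a) / c powr (- a)" by (rule powr_divide)
  also have "c powr (- a) = inverse (c powr a)" by (rule powr_minus)
  finally show ?thesis by (simp add: divide_inverse mult.commute)
qed

lemma threshold_powr_bound:
  fixes r b p \<beta> \<alpha> G e A B :: real
  assumes r: "1 \<le> r" and e1: "b * p - \<alpha> \<le> - e" and e2: "G - b * \<beta> \<le> - e" and "0 \<le> A" "0 \<le> B"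
  shows "(r powr b) powr p * (A * r powr (- \<alpha>)) + (r powr b) powr (- \<beta>) * (B * r powr G)
    \<le> (A + B) * r powr (- e)"
proof -
  have "(r powr b) powr p * (A * r powr (- \<alpha>)) = A * r powr (b * p - \<alpha>)"
    by (simp add: powr_powr powr_diff powr_minus divide_inverse)
  also have "\<dots> \<le> A * r powr (- e)" using r e1 \<open>0 \<le> A\<close> by (intro mult_left_mono powr_mono) auto
  finally have 1: "(r powr b) powr p * (A * r powr (- \<alpha>)) \<le> A * r powr (- e)" .
  have "(r powr b) powr (- \<beta>) * (B * r powr G) = B * r powr (G - b * \<beta>)"
    by (simp add: powr_powr powr_diff powr_minus divide_inverse mult_ac)
  also have "\<dots> \<le> B * r powr (- e)" using r e2 \<open>0 \<le> B\<close> by (intro mult_left_mono powr_mono) auto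
  finally show ?thesis using 1 by (simp add: distrib_right)
qed

context stationary_point_process
begin

lemma nn_integral_void_le_palm_prob:
  assumes m: "0 < intensity P"
  shows "(\<integral>\<^sup>+\<xi>. cube_count \<xi> * of_bool (count_in (Lambda h g) \<xi> = 0) \<partial>P) \<le>
    ennreal (intensity P) * palm_prob P {\<xi>. \<xi> \<inter> Lambda (h - 1/2) (g - (1/2) *\<^sub>R One) = {}}"
proof -
  define A where "A = {\<xi>::'a set. \<xi> \<inter> Lambda (h - 1/2) (g - (1/2) *\<^sub>R One) = {}}"
  have "ennreal (intensity P) * palm_prob P A = (\<integral>\<^sup>+\<xi>. (\<Sum>x\<in>\<xi> \<inter> unit_cube. indicator A (translate x \<xi>)) \<partial>P)"
    unfolding palm_prob_def palm_exp_def using m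
    by (simp add: ennreal_mult[symmetric] mult.assoc[symmetric])
  moreover have "(\<integral>\<^sup>+\<xi>. cube_count \<xi> * of_bool (count_in (Lambda h g) \<xi> = 0) \<partial>P) \<le>
      (\<integral>\<^sup>+\<xi>. (\<Sum>x\<in>\<xi> \<inter> unit_cube. indicator A (translate x \<xi>)) \<partial>P)"
  proof (rule nn_integral_mono)
    fix \<xi> assume \<xi>: "\<xi> \<in> space P"
    show "cube_count \<xi> * of_bool (count_in (Lambda h g) \<xi> = 0) \<le> (\<Sum>x\<in>\<xi> \<inter> unit_cube. indicator A (translate x \<xi>))"
    proof (cases "count_in (Lambda h g) \<xi> = 0")
      case True
      then have empty: "\<xi> \<inter> Lambda h g = {}" using count_in_eq_0_iff[OF \<xi>] by simp
      have "translate x \<xi> \<in> A" if x: "x \<in> unit_cube" for x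
      proof -
        have "y + x \<in> Lambda h g" if "y \<in> Lambda (h - 1/2) (g - (1/2) *\<^sub>R One)" for y
          using that x by (fastforce simp: mem_Lambda mem_unit_cube inner_diff_left inner_add_left)
        then show ?thesis using empty by (auto simp: A_def mem_translate)
      qed
      then have "(\<Sum>x\<in>\<xi> \<inter> unit_cube. indicator A (translate x \<xi>)) = (\<Sum>x\<in>\<xi> \<inter> unit_cube. (1::ennreal))"
        by (intro sum.cong) auto
      then show ?thesis using True by (simp add: cube_count_def count_in_def ennreal_of_nat_eq_real_of_nat)
    qed simp
  qed
  ultimately show ?thesis unfolding A_def by simp
qed

lemma void_moment_le_split:
  assumes t: "0 < t" and \<beta>: "0 < \<beta>" and p: "0 \<le> p" and Q: "bounded Q" "Q \<in> sets borel"
  shows "(\<integral>\<^sup>+\<xi>. cube_count \<xi> * of_bool (count_in Q \<xi> = 0) * ennreal (real (count_in (Lambda R 0) \<xi>) powr p) \<partial>P)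
    \<le> ennreal (t powr p) * (\<integral>\<^sup>+\<xi>. cube_count \<xi> * of_bool (count_in Q \<xi> = 0) \<partial>P) +
      ennreal (t powr (- \<beta>)) * (\<integral>\<^sup>+\<xi>. cube_count \<xi> * ennreal (real (count_in (Lambda R 0) \<xi>) powr (p + \<beta>)) \<partial>P)"
proof -
  have "cube_count \<xi> * of_bool (count_in Q \<xi> = 0) * ennreal (real (count_in (Lambda R 0) \<xi>) powr p)
      \<le> ennreal (t powr p) * (cube_count \<xi> * of_bool (count_in Q \<xi> = 0)) +
        ennreal (t powr (- \<beta>)) * (cube_count \<xi> * ennreal (real (count_in (Lambda R 0) \<xi>) powr (p + \<beta>)))"
    for \<xi>
  proof (cases "count_in Q \<xi> = 0")
    case True
    define X where "X = real (count_in (Lambda R 0) \<xi>)"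
    have "X powr p \<le> t powr p + t powr (- \<beta>) * X powr (p + \<beta>)"
      using of_bool_mult_powr_le[of X t p \<beta>, where b = True] t p \<beta> by (simp add: X_def)
    then have "ennreal (X powr p) \<le> ennreal (t powr p + t powr (- \<beta>) * X powr (p + \<beta>))"
      by (rule ennreal_leI)
    also have "\<dots> = ennreal (t powr p) + ennreal (t powr (- \<beta>)) * ennreal (X powr (p + \<beta>))"
      by (simp add: ennreal_mult)
    finally have "ennreal (X powr p) \<le> ennreal (t powr p) + ennreal (t powr (- \<beta>)) * ennreal (X powr (p + \<beta>))" .
    then have "cube_count \<xi> * ennreal (X powr p)
        \<le> cube_count \<xi> * (ennreal (t powr p) + ennreal (t powr (- \<beta>)) * ennreal (X powr (p + \<beta>)))"
      by (rule mult_left_mono) simp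
    then show ?thesis using True by (simp add: X_def distrib_left mult_ac)
  qed simp
  then have "(\<integral>\<^sup>+\<xi>. cube_count \<xi> * of_bool (count_in Q \<xi> = 0) * ennreal (real (count_in (Lambda R 0) \<xi>) powr p) \<partial>P)
      \<le> (\<integral>\<^sup>+\<xi>. ennreal (t powr p) * (cube_count \<xi> * of_bool (count_in Q \<xi> = 0)) +
        ennreal (t powr (- \<beta>)) * (cube_count \<xi> * ennreal (real (count_in (Lambda R 0) \<xi>) powr (p + \<beta>))) \<partial>P)"
    by (intro nn_integral_mono)
  also have "\<dots> = ennreal (t powr p) * (\<integral>\<^sup>+\<xi>. cube_count \<xi> * of_bool (count_in Q \<xi> = 0) \<partial>P) +
      ennreal (t powr (- \<beta>)) * (\<integral>\<^sup>+\<xi>. cube_count \<xi> * ennreal (real (count_in (Lambda R 0) \<xi>) powr (p + \<beta>)) \<partial>P)"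
  proof -
    have "(\<lambda>\<xi>. cube_count \<xi> * of_bool (count_in Q \<xi> = 0)) \<in> borel_measurable P"
      "(\<lambda>\<xi>. cube_count \<xi> * ennreal (real (count_in (Lambda R 0) \<xi>) powr (p + \<beta>))) \<in> borel_measurable P"
      using Q by (intro borel_measurable_times_ennreal cube_count_measurable borel_measurable_count_in; simp)+
    then show ?thesis by (simp add: nn_integral_add nn_integral_cmult)
  qed
  finally show ?thesis .
qed

lemma palm_deg0_pow_finite_C1:
  assumes p: "1 \<le> p" and m: "0 < intensity P" and \<alpha>: "0 < \<alpha>'" and C0: "0 < C0"
    and \<gamma>: "p + 1 < \<gamma>" and rho: "rho P \<gamma> < \<infinity>"
    and \<alpha>\<gamma>: "real DIM('a) * p * (\<gamma> - 1) / (\<gamma> - 1 - p) < \<alpha>'"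
    and palm_void: "\<forall>x l. l > 0 \<longrightarrow> palm_prob P {\<xi>. \<xi> \<inter> Lambda l x = {}} \<le> ennreal (C0 * l powr (- \<alpha>'))"
  shows "palm_exp P (\<lambda>\<xi>. deg0_pow \<xi> p) < \<infinity>"
proof -
  define d where "d = real DIM('a)"
  have d: "1 \<le> d" unfolding d_def using DIM_positive[where 'a='a] by linarith
  define \<beta> where "\<beta> = \<gamma> - 1 - p"
  have \<beta>: "0 < \<beta>" "p + \<beta> = \<gamma> - 1" unfolding \<beta>_def using \<gamma> by auto
  txt \<open>Splitting at the threshold \<open>\<xi>(\<Lambda>\<^sub>4\<^sub>r\<^sub>+\<^sub>1) = r\<^sup>b\<close> costs \<open>r\<^sup>b\<^sup>p\<^sup>-\<^sup>\<alpha>\<^sup>'\<close> on the void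
    event and \<open>r\<^sup>d\<^sup>(\<^sup>\<gamma>\<^sup>-\<^sup>1\<^sup>)\<^sup>-\<^sup>b\<^sup>\<beta>\<close> beyond the threshold; \<open>b\<close> makes both exponents negative.\<close>
  have "0 < p" using p by simp
  moreover have "p * (d * (\<gamma> - 1)) / \<beta> < \<alpha>'" using \<alpha>\<gamma> unfolding d_def \<beta>_def by (simp add: mult_ac)
  ultimately obtain b e where e: "0 < e" "b * p - \<alpha>' \<le> - e" "d * (\<gamma> - 1) - b * \<beta> \<le> - e"
    using exists_split_exponent[OF _ \<beta>(1)] by blast
  obtain \<rho> where \<rho>: "rho P \<gamma> = ennreal \<rho>" "0 \<le> \<rho>" using rho by (cases "rho P \<gamma>") auto
  define A where "A = intensity P * C0 * (6 * d) powr \<alpha>'"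
  define B where "B = 2 * 14 powr (d * (\<gamma> - 1)) * \<rho>"
  have AB: "0 \<le> A" "0 \<le> B" unfolding A_def B_def using m C0 \<rho> by simp_all
  show ?thesis
  proof (rule palm_deg0_pow_finite_if_void_moments_decay[OF p m _ _ e(1)])
    have "rho P (p + 1) \<le> rho P \<gamma>" using p \<gamma> by (intro rho_mono) auto
    then show "rho P (p + 1) < \<infinity>" using rho by (rule le_less_trans)
    show "2 * real DIM('a) < 3 * d + 1" using d_def by simp
    show "0 \<le> A + B" using AB by simp
    fix r g assume "3 * d + 1 \<le> r"
    define h where "h = r / real (3 * DIM('a))"
    have r: "1 \<le> r" and h: "1 \<le> h" "h / 2 = r / (6 * d)"
      using \<open>3 * d + 1 \<le> r\<close> d unfolding h_def d_def by (simp_all add: field_simps)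
    have "(h - 1/2) powr (- \<alpha>') \<le> (r / (6 * d)) powr (- \<alpha>')"
      using h \<alpha> by (intro powr_mono2') auto
    also have "\<dots> = (6 * d) powr \<alpha>' * r powr (- \<alpha>')"
      using r d by (intro divide_powr_uminus) auto
    finally have hr: "(h - 1/2) powr (- \<alpha>') \<le> (6 * d) powr \<alpha>' * r powr (- \<alpha>')" .
    have "(\<integral>\<^sup>+\<xi>. cube_count \<xi> * of_bool (count_in (Lambda h g) \<xi> = 0) \<partial>P)
        \<le> ennreal (intensity P) * palm_prob P {\<xi>. \<xi> \<inter> Lambda (h - 1/2) (g - (1/2) *\<^sub>R One) = {}}"
      by (rule nn_integral_void_le_palm_prob[OF m])
    also have "\<dots> \<le> ennreal (intensity P) * ennreal (C0 * (h - 1/2) powr (- \<alpha>'))"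
      using palm_void h by (intro mult_left_mono) auto
    also have "\<dots> \<le> ennreal (A * r powr (- \<alpha>'))"
      unfolding A_def using m C0 hr
      by (simp add: ennreal_mult[symmetric] ennreal_leI mult_left_mono mult.assoc)
    finally have void: "(\<integral>\<^sup>+\<xi>. cube_count \<xi> * of_bool (count_in (Lambda h g) \<xi> = 0) \<partial>P)
        \<le> ennreal (A * r powr (- \<alpha>'))" .
    have "(\<integral>\<^sup>+\<xi>. cube_count \<xi> * ennreal (real (count_in (Lambda (4 * r + 1) 0) \<xi>) powr (p + \<beta>)) \<partial>P)
        \<le> ennreal (2 * 14 powr (d * (\<gamma> - 1)) * r powr (d * (\<gamma> - 1))) * rho P \<gamma>"
      using cube_count_moment_le_powr[of "p + \<beta>" r] r p \<beta> unfolding d_def by simp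
    also have "\<dots> = ennreal (B * r powr (d * (\<gamma> - 1)))"
      unfolding B_def \<rho> using \<rho>(2) by (simp add: ennreal_mult[symmetric] mult_ac)
    finally have moment: "(\<integral>\<^sup>+\<xi>. cube_count \<xi> * ennreal (real (count_in (Lambda (4 * r + 1) 0) \<xi>) powr (p + \<beta>)) \<partial>P)
        \<le> ennreal (B * r powr (d * (\<gamma> - 1)))" .
    have "(\<integral>\<^sup>+\<xi>. cube_count \<xi> * of_bool (count_in (Lambda h g) \<xi> = 0) *
          ennreal (real (count_in (Lambda (4 * r + 1) 0) \<xi>) powr p) \<partial>P)
        \<le> ennreal ((r powr b) powr p) * (\<integral>\<^sup>+\<xi>. cube_count \<xi> * of_bool (count_in (Lambda h g) \<xi> = 0) \<partial>P) +
          ennreal ((r powr b) powr (- \<beta>)) *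
            (\<integral>\<^sup>+\<xi>. cube_count \<xi> * ennreal (real (count_in (Lambda (4 * r + 1) 0) \<xi>) powr (p + \<beta>)) \<partial>P)"
      using r \<beta>(1) p by (intro void_moment_le_split) auto
    also have "\<dots> \<le> ennreal ((r powr b) powr p) * ennreal (A * r powr (- \<alpha>')) +
        ennreal ((r powr b) powr (- \<beta>)) * ennreal (B * r powr (d * (\<gamma> - 1)))"
      using void moment by (intro add_mono mult_left_mono) auto
    also have "\<dots> = ennreal ((r powr b) powr p * (A * r powr (- \<alpha>')) +
        (r powr b) powr (- \<beta>) * (B * r powr (d * (\<gamma> - 1))))"
      using AB by (simp add: ennreal_mult ennreal_plus)
    also have "\<dots> \<le> ennreal ((A + B) * r powr (- e))"
      using threshold_powr_bound[OF r e(2,3) AB] by (rule ennreal_leI)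
    finally show "(\<integral>\<^sup>+\<xi>. cube_count \<xi> * of_bool (count_in (Lambda (r / real (3 * DIM('a))) g) \<xi> = 0) *
          ennreal (real (count_in (Lambda (4 * r + 1) 0) \<xi>) powr p) \<partial>P) \<le> ennreal ((A + B) * r powr (- e))"
      unfolding h_def .
  qed
qed

end

section \<open>Decay of the void probabilities: case (C2)\<close>

lemma geometric_le_powr_decay:
  fixes q N :: real
  assumes q: "0 \<le> q" "q < 1" and N: "0 \<le> N"
  shows "\<exists>C\<ge>0. \<forall>n::nat. q ^ n \<le> C * (real n + 1) powr (- N)"
proof (cases "q = 0")
  case True
  have "q ^ n \<le> 1 * (real n + 1) powr (- N)" for n :: nat
    using True by (cases n) auto
  then show ?thesis by (intro exI[of _ 1]) auto
next
  case False
  then have qpos: "0 < q" using q by simp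
  define \<mu> where "\<mu> = - ln q"
  have \<mu>: "0 < \<mu>" unfolding \<mu>_def using qpos q by simp
  define K :: nat where "K = nat \<lceil>N\<rceil> + 1"
  have K: "0 < K" "N \<le> real K" unfolding K_def by linarith+
  define c where "c = min 1 (\<mu> / real K)"
  have c: "0 < c" "c \<le> 1" "c \<le> \<mu> / real K" unfolding c_def using \<mu> K by auto
  have "q ^ n \<le> c powr (- real K) * (real n + 1) powr (- N)" for n :: nat
  proof -
    have "c * (real n + 1) \<le> 1 + \<mu> * real n / real K"
      using c mult_right_mono[OF c(3), of "real n"] by (simp add: distrib_left)
    then have "(c * (real n + 1)) ^ K \<le> (1 + \<mu> * real n / real K) ^ K"
      using c by (intro power_mono) auto
    also have "\<dots> \<le> exp (\<mu> * real n)"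
    proof (rule exp_ge_one_plus_x_over_n_power_n)
      have "0 \<le> \<mu> * real n" using \<mu> by simp
      then show "- real K \<le> \<mu> * real n" by linarith
    qed (use K in auto)
    finally have lb: "(c * (real n + 1)) ^ K \<le> exp (\<mu> * real n)" .
    have "q ^ n = exp (real n * ln q)" using qpos by (simp add: exp_of_nat_mult)
    also have "\<dots> = 1 / exp (\<mu> * real n)"
      unfolding \<mu>_def by (simp add: exp_minus[symmetric] inverse_eq_divide[symmetric] mult.commute)
    also have "\<dots> \<le> 1 / (c * (real n + 1)) ^ K" using lb c by (intro divide_left_mono) auto
    also have "\<dots> = c powr (- real K) * (real n + 1) powr (- real K)"
      using c by (simp add: powr_realpow[symmetric] powr_minus divide_inverse powr_mult)
    also have "\<dots> \<le> c powr (- real K) * (real n + 1) powr (- N)"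
      using K by (intro mult_left_mono powr_mono) auto
    finally show ?thesis .
  qed
  then show ?thesis using c by (intro exI[of _ "c powr (- real K)"]) auto
qed

lemma prod_of_bool_ennreal:
  "finite I \<Longrightarrow> (\<Prod>i\<in>I. (of_bool (P i) :: ennreal)) = of_bool (\<forall>i\<in>I. P i)"
  by (induction I rule: finite_induct) auto

text \<open>Under finite range of dependence \<open>L\<close> these unit cubes, spaced by \<open>1 + L\<close> along \<open>e\<close>, are
  void independently; this makes the void probability of a large cube decay geometrically.\<close>
definition block :: "'a::euclidean_space \<Rightarrow> real \<Rightarrow> 'a \<Rightarrow> nat \<Rightarrow> 'a set" where
  "block v L e i = (+) (v + (real i * (1 + L)) *\<^sub>R e) ` unit_cube"

lemma bounded_block [intro, simp]: "bounded (block v L e i)"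
  unfolding block_def by (intro bounded_translation bounded_unit_cube)

lemma block_in_borel [intro, simp]: "block v L e i \<in> sets borel"
  unfolding block_def by (intro translation_in_borel unit_cube_in_borel)

lemma dist_blocks_ge:
  fixes e :: "'a::euclidean_space"
  assumes e: "e \<in> Basis" and i: "i < n" and L: "0 < L"
    and a: "a \<in> block v L e n" and b: "b \<in> block v L e i"
  shows "L \<le> dist a b"
proof -
  obtain u where u: "u \<in> unit_cube" "a = v + (real n * (1 + L)) *\<^sub>R e + u" using a unfolding block_def by auto
  obtain u' where u': "u' \<in> unit_cube" "b = v + (real i * (1 + L)) *\<^sub>R e + u'" using b unfolding block_def by auto
  have "0 \<le> u \<bullet> e" "u' \<bullet> e \<le> 1" using u(1) u'(1) e unfolding mem_unit_cube by auto
  moreover have "1 + L \<le> (real n - real i) * (1 + L)" using i L by simp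
  moreover have "(a - b) \<bullet> e = (real n - real i) * (1 + L) + u \<bullet> e - u' \<bullet> e"
    using e by (simp add: u(2) u'(2) inner_diff_left inner_add_left algebra_simps)
  ultimately have "L \<le> (a - b) \<bullet> e" by linarith
  also have "\<dots> \<le> norm (a - b)" using Basis_le_norm[OF e, of "a - b"] by linarith
  finally show ?thesis by (simp add: dist_norm)
qed

lemma blocks_subset_Lambda:
  fixes e :: "'a::euclidean_space"
  assumes e: "e \<in> Basis" and l: "1 \<le> l" and L: "0 < L" and i: "i \<le> nat \<lfloor>(2 * l - 1) / (1 + L)\<rfloor>"
  shows "block (g - l *\<^sub>R One) L e i \<subseteq> Lambda l g"
proof
  fix w assume "w \<in> block (g - l *\<^sub>R One) L e i"
  then obtain u where u: "u \<in> unit_cube" "w = g - l *\<^sub>R One + (real i * (1 + L)) *\<^sub>R e + u"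
    unfolding block_def by auto
  have "0 \<le> (2 * l - 1) / (1 + L)" using l L by simp
  then have "real i \<le> (2 * l - 1) / (1 + L)" using i by linarith
  then have is1: "0 \<le> real i * (1 + L)" "real i * (1 + L) \<le> 2 * l - 1"
    using L by (simp_all add: pos_le_divide_eq)
  show "w \<in> Lambda l g" unfolding mem_Lambda
  proof
    fix b :: 'a assume b: "b \<in> Basis"
    have "0 \<le> u \<bullet> b" "u \<bullet> b \<le> 1" using u(1) b unfolding mem_unit_cube by auto
    moreover have "0 \<le> e \<bullet> b" "e \<bullet> b \<le> 1" using e b by (auto simp: inner_Basis)
    then have "0 \<le> real i * (1 + L) * (e \<bullet> b)" "real i * (1 + L) * (e \<bullet> b) \<le> real i * (1 + L)"
      using is1 by (auto intro: mult_left_le)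
    moreover have "w \<bullet> b = g \<bullet> b - l + real i * (1 + L) * (e \<bullet> b) + u \<bullet> b"
      using b by (simp add: u(2) inner_diff_left inner_add_left)
    ultimately show "g \<bullet> b - l \<le> w \<bullet> b \<and> w \<bullet> b \<le> g \<bullet> b + l" using is1 by linarith
  qed
qed

context stationary_point_process
begin

lemma nn_integral_indep_restrict:
  fixes F G :: "'a set \<Rightarrow> ennreal"
  assumes indep: "indep_var N_space (\<lambda>\<xi>. \<xi> \<inter> A) N_space (\<lambda>\<xi>. \<xi> \<inter> B)"
    and F: "F \<in> borel_measurable N_space" and G: "G \<in> borel_measurable N_space"
  shows "(\<integral>\<^sup>+\<xi>. F (\<xi> \<inter> A) * G (\<xi> \<inter> B) \<partial>P) = (\<integral>\<^sup>+\<xi>. F (\<xi> \<inter> A) \<partial>P) * (\<integral>\<^sup>+\<xi>. G (\<xi> \<inter> B) \<partial>P)"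
proof -
  define X where "X = case_bool (F \<circ> (\<lambda>\<xi>. \<xi> \<inter> A)) (G \<circ> (\<lambda>\<xi>. \<xi> \<inter> B))"
  have "case_bool borel borel = (\<lambda>_::bool. (borel :: ennreal measure))"
    by (rule ext) (simp split: bool.split)
  then have "indep_vars (\<lambda>_. borel) X UNIV"
    using indep_var_compose[OF indep F G] unfolding indep_var_def X_def by simp
  from indep_vars_nn_integral[OF _ this]
  have "(\<integral>\<^sup>+\<omega>. (\<Prod>i\<in>UNIV. X i \<omega>) \<partial>P) = (\<Prod>i\<in>UNIV. \<integral>\<^sup>+\<omega>. X i \<omega> \<partial>P)" by simp
  then show ?thesis by (simp add: UNIV_bool X_def mult.commute comp_def)
qed

lemma void_measurable_N_space:
  "bounded B \<Longrightarrow> B \<in> sets borel \<Longrightarrow> (\<lambda>\<eta>. (of_bool (count_in B \<eta> = 0) :: ennreal)) \<in> borel_measurable N_space"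
  by (rule measurable_compose[OF count_in_measurable_N_space]) simp_all

lemma count_in_Int_self [simp]: "count_in B (\<xi> \<inter> B) = count_in B \<xi>"
  unfolding count_in_def by (simp add: Int_assoc)

lemma prob_void_unit_cube_less_1:
  assumes m: "0 < intensity P"
  shows "prob {\<xi>\<in>space P. count_in unit_cube \<xi> = 0} < 1"
proof (rule ccontr)
  assume "\<not> prob {\<xi>\<in>space P. count_in unit_cube \<xi> = 0} < 1"
  then have "prob {\<xi>\<in>space P. count_in unit_cube \<xi> = 0} = 1" using prob_le_1 by (simp add: not_less antisym)
  then have "AE \<xi> in P. \<xi> \<in> {\<xi>\<in>space P. count_in unit_cube \<xi> = 0}" by (rule AE_prob_1)
  then have "AE \<xi> in P. real (card (\<xi> \<inter> unit_cube)) = 0" by (auto simp: count_in_def)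
  then have "intensity P = (\<integral>\<xi>. 0 \<partial>P)"
    unfolding intensity_def using borel_measurable_count_in[of unit_cube real]
    by (intro integral_cong_AE) (auto simp: count_in_def)
  then show False using m by simp
qed

lemma nn_integral_void_blocks:
  assumes indep: "\<And>A B. A \<in> sets borel \<Longrightarrow> B \<in> sets borel \<Longrightarrow> (\<forall>a\<in>A. \<forall>b\<in>B. L \<le> dist a b) \<Longrightarrow>
      indep_var N_space (\<lambda>\<xi>. \<xi> \<inter> A) N_space (\<lambda>\<xi>. \<xi> \<inter> B)"
    and L: "0 < L" and e: "e \<in> Basis"
  shows "(\<integral>\<^sup>+\<xi>. (\<Prod>i<n. of_bool (count_in (block v L e i) \<xi> = 0)) \<partial>P)
    = ennreal (prob {\<xi>\<in>space P. count_in unit_cube \<xi> = 0}) ^ n"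
proof (induction n)
  case 0
  then show ?case by (simp add: emeasure_space_1)
next
  case (Suc n)
  define U where "U = (\<Union>i<n. block v L e i)"
  have U: "bounded U" "U \<in> sets borel" unfolding U_def by auto
  have prod_U: "(\<Prod>i<n. of_bool (count_in (block v L e i) \<xi> = 0)) = (of_bool (count_in U \<xi> = 0) :: ennreal)"
    if \<xi>: "\<xi> \<in> space P" for \<xi>
  proof -
    have "(\<forall>i\<in>{..<n}. count_in (block v L e i) \<xi> = 0) \<longleftrightarrow> count_in U \<xi> = 0"
      using count_in_eq_0_iff[OF \<xi>] U unfolding U_def by auto
    then show ?thesis by (simp add: prod_of_bool_ennreal)
  qed
  have "indep_var N_space (\<lambda>\<xi>. \<xi> \<inter> block v L e n) N_space (\<lambda>\<xi>. \<xi> \<inter> U)"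
    using dist_blocks_ge[OF e _ L] U by (intro indep) (auto simp: U_def)
  then have indep_nU: "(\<integral>\<^sup>+\<xi>. of_bool (count_in (block v L e n) (\<xi> \<inter> block v L e n) = 0) *
        of_bool (count_in U (\<xi> \<inter> U) = 0) \<partial>P)
      = (\<integral>\<^sup>+\<xi>. of_bool (count_in (block v L e n) (\<xi> \<inter> block v L e n) = 0) \<partial>P) *
        (\<integral>\<^sup>+\<xi>. of_bool (count_in U (\<xi> \<inter> U) = 0) \<partial>P)"
    using U by (intro nn_integral_indep_restrict void_measurable_N_space) auto
  have block_n: "(\<integral>\<^sup>+\<xi>. of_bool (count_in (block v L e n) \<xi> = 0) \<partial>P)
      = ennreal (prob {\<xi>\<in>space P. count_in unit_cube \<xi> = 0})"
    using nn_integral_count_in_translation[of unit_cube "\<lambda>k. of_bool (k = 0)" "v + (real n * (1 + L)) *\<^sub>R e"]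
    by (simp add: block_def nn_integral_void)
  have "(\<integral>\<^sup>+\<xi>. (\<Prod>i<Suc n. of_bool (count_in (block v L e i) \<xi> = 0)) \<partial>P)
      = (\<integral>\<^sup>+\<xi>. of_bool (count_in (block v L e n) (\<xi> \<inter> block v L e n) = 0) *
        of_bool (count_in U (\<xi> \<inter> U) = 0) \<partial>P)"
    by (rule nn_integral_cong) (simp add: prod_U mult.commute)
  also have "\<dots> = (\<integral>\<^sup>+\<xi>. of_bool (count_in (block v L e n) (\<xi> \<inter> block v L e n) = 0) \<partial>P) *
        (\<integral>\<^sup>+\<xi>. of_bool (count_in U (\<xi> \<inter> U) = 0) \<partial>P)"
    by (rule indep_nU)
  also have "(\<integral>\<^sup>+\<xi>. of_bool (count_in U (\<xi> \<inter> U) = 0) \<partial>P)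
      = (\<integral>\<^sup>+\<xi>. (\<Prod>i<n. of_bool (count_in (block v L e i) \<xi> = 0)) \<partial>P)"
    by (rule nn_integral_cong) (simp add: prod_U)
  finally show ?case using block_n Suc.IH by simp
qed

lemma prob_void_Lambda_le_power:
  assumes indep: "\<And>A B. A \<in> sets borel \<Longrightarrow> B \<in> sets borel \<Longrightarrow> (\<forall>a\<in>A. \<forall>b\<in>B. L \<le> dist a b) \<Longrightarrow>
      indep_var N_space (\<lambda>\<xi>. \<xi> \<inter> A) N_space (\<lambda>\<xi>. \<xi> \<inter> B)"
    and L: "0 < L" and l: "1 \<le> l"
  shows "prob {\<xi>\<in>space P. count_in (Lambda l g) \<xi> = 0}
     \<le> prob {\<xi>\<in>space P. count_in unit_cube \<xi> = 0} ^ (nat \<lfloor>(2 * l - 1) / (1 + L)\<rfloor> + 1)"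
proof -
  obtain e :: 'a where e: "e \<in> Basis" using nonempty_Basis by blast
  define n where "n = nat \<lfloor>(2 * l - 1) / (1 + L)\<rfloor> + 1"
  define v where "v = g - l *\<^sub>R One"
  have "of_bool (count_in (Lambda l g) \<xi> = 0) \<le> (\<Prod>i<n. (of_bool (count_in (block v L e i) \<xi> = 0) :: ennreal))"
    if \<xi>: "\<xi> \<in> space P" for \<xi>
  proof (cases "count_in (Lambda l g) \<xi> = 0")
    case True
    have "count_in (block v L e i) \<xi> = 0" if "i < n" for i
    proof -
      have "block v L e i \<subseteq> Lambda l g"
        using blocks_subset_Lambda[OF e l L] that unfolding n_def v_def by simp
      then show ?thesis using True count_in_eq_0_iff[OF \<xi>] by blast
    qed
    then show ?thesis by (simp add: prod_of_bool_ennreal)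
  qed simp
  then have "ennreal (prob {\<xi>\<in>space P. count_in (Lambda l g) \<xi> = 0})
      \<le> (\<integral>\<^sup>+\<xi>. (\<Prod>i<n. of_bool (count_in (block v L e i) \<xi> = 0)) \<partial>P)"
    by (auto simp flip: nn_integral_void intro: nn_integral_mono)
  also have "\<dots> = ennreal (prob {\<xi>\<in>space P. count_in unit_cube \<xi> = 0} ^ n)"
    by (simp add: nn_integral_void_blocks[OF indep L e] ennreal_power)
  finally show ?thesis unfolding n_def by (simp add: ennreal_le_iff)
qed

lemma void_moment_le_indep:
  assumes indep: "\<And>A B. A \<in> sets borel \<Longrightarrow> B \<in> sets borel \<Longrightarrow> (\<forall>a\<in>A. \<forall>b\<in>B. L \<le> dist a b) \<Longrightarrow>
      indep_var N_space (\<lambda>\<xi>. \<xi> \<inter> A) N_space (\<lambda>\<xi>. \<xi> \<inter> B)"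
    and L: "0 < L" and R: "1 \<le> R" and p: "0 \<le> p"
  shows "(\<integral>\<^sup>+\<xi>. cube_count \<xi> * of_bool (count_in (Lambda h g) \<xi> = 0) *
      ennreal (real (count_in (Lambda R 0) \<xi>) powr p) \<partial>P)
    \<le> (\<integral>\<^sup>+\<xi>. cube_count \<xi> * ennreal (real (count_in (Lambda R 0) \<xi>) powr p) \<partial>P) *
      ennreal (prob {\<xi>\<in>space P. count_in (Lambda (h - L) g) \<xi> = 0})"
proof -
  define A where "A = Lambda R (0::'a) - Lambda h g"
  define Q where "Q = Lambda (h - L) g"
  define F :: "'a set \<Rightarrow> ennreal" where
    "F \<eta> = cube_count \<eta> * ennreal (real (count_in (Lambda R 0) \<eta>) powr p)" for \<eta>
  have indep_AQ: "indep_var N_space (\<lambda>\<xi>. \<xi> \<inter> A) N_space (\<lambda>\<xi>. \<xi> \<inter> Q)"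
  proof (rule indep)
    show "\<forall>a\<in>A. \<forall>c\<in>Q. L \<le> dist a c"
    proof (intro ballI)
      fix a c assume a: "a \<in> A" and c: "c \<in> Q"
      from a have "a \<notin> Lambda h g" unfolding A_def by blast
      then obtain b :: 'a where b: "b \<in> Basis" "\<not> (g \<bullet> b - h \<le> a \<bullet> b \<and> a \<bullet> b \<le> g \<bullet> b + h)"
        unfolding mem_Lambda by blast
      moreover have "g \<bullet> b - (h - L) \<le> c \<bullet> b" "c \<bullet> b \<le> g \<bullet> b + (h - L)"
        using c b(1) unfolding Q_def mem_Lambda by auto
      ultimately have "L \<le> \<bar>(a - c) \<bullet> b\<bar>" by (auto simp: inner_diff_left)
      also have "\<dots> \<le> norm (a - c)" by (rule Basis_le_norm[OF b(1)])
      finally show "L \<le> dist a c" by (simp add: dist_norm)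
    qed
  qed (auto simp: A_def Q_def)
  have F: "F \<in> borel_measurable N_space" unfolding F_def cube_count_def
    by (intro borel_measurable_times_ennreal measurable_compose[OF count_in_measurable_N_space]) simp_all
  have "cube_count \<xi> * of_bool (count_in (Lambda h g) \<xi> = 0) * ennreal (real (count_in (Lambda R 0) \<xi>) powr p)
      \<le> F (\<xi> \<inter> A) * of_bool (count_in Q (\<xi> \<inter> Q) = 0)" if \<xi>: "\<xi> \<in> space P" for \<xi>
  proof (cases "count_in (Lambda h g) \<xi> = 0")
    case True
    then have empty: "\<xi> \<inter> Lambda h g = {}" using count_in_eq_0_iff[OF \<xi>] by simp
    moreover have "unit_cube \<subseteq> Lambda R 0" "Q \<subseteq> Lambda h g"
      using unit_cube_subset_Lambda[OF R] Lambda_mono[of "h - L" h g] L unfolding Q_def by auto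
    ultimately have "\<xi> \<inter> A \<inter> unit_cube = \<xi> \<inter> unit_cube" "\<xi> \<inter> A \<inter> Lambda R 0 = \<xi> \<inter> Lambda R 0"
      "\<xi> \<inter> Q = {}"
      unfolding A_def by blast+
    then show ?thesis using True by (simp add: F_def cube_count_def count_in_def)
  qed simp
  then have "(\<integral>\<^sup>+\<xi>. cube_count \<xi> * of_bool (count_in (Lambda h g) \<xi> = 0) *
      ennreal (real (count_in (Lambda R 0) \<xi>) powr p) \<partial>P)
      \<le> (\<integral>\<^sup>+\<xi>. F (\<xi> \<inter> A) * of_bool (count_in Q (\<xi> \<inter> Q) = 0) \<partial>P)"
    by (intro nn_integral_mono)
  also have "\<dots> = (\<integral>\<^sup>+\<xi>. F (\<xi> \<inter> A) \<partial>P) * (\<integral>\<^sup>+\<xi>. of_bool (count_in Q (\<xi> \<inter> Q) = 0) \<partial>P)"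
    using indep_AQ F by (intro nn_integral_indep_restrict void_measurable_N_space) (auto simp: Q_def)
  also have "(\<integral>\<^sup>+\<xi>. of_bool (count_in Q (\<xi> \<inter> Q) = 0) \<partial>P) = ennreal (prob {\<xi>\<in>space P. count_in Q \<xi> = 0})"
    by (simp add: Q_def nn_integral_void)
  also have "(\<integral>\<^sup>+\<xi>. F (\<xi> \<inter> A) \<partial>P) \<le> (\<integral>\<^sup>+\<xi>. F \<xi> \<partial>P)"
  proof (rule nn_integral_mono)
    fix \<xi> assume \<xi>: "\<xi> \<in> space P"
    have "count_in unit_cube (\<xi> \<inter> A) \<le> count_in unit_cube \<xi>" "count_in (Lambda R 0) (\<xi> \<inter> A) \<le> count_in (Lambda R 0) \<xi>"
      unfolding count_in_def by (intro card_mono finite_Int_bounded[OF \<xi>]; auto)+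
    then show "F (\<xi> \<inter> A) \<le> F \<xi>"
      unfolding F_def cube_count_def using p
      by (intro mult_mono ennreal_leI powr_mono2) auto
  qed
  finally show ?thesis unfolding F_def Q_def by (simp add: mult_right_mono)
qed

lemma prob_void_Lambda_le_powr:
  fixes N :: real
  assumes indep: "\<And>A B. A \<in> sets borel \<Longrightarrow> B \<in> sets borel \<Longrightarrow> (\<forall>a\<in>A. \<forall>b\<in>B. L \<le> dist a b) \<Longrightarrow>
      indep_var N_space (\<lambda>\<xi>. \<xi> \<inter> A) N_space (\<lambda>\<xi>. \<xi> \<inter> B)"
    and L: "0 < L" and m: "0 < intensity P" and N: "0 \<le> N"
  obtains C where "0 \<le> C" "\<And>l g. 1 \<le> l \<Longrightarrow> prob {\<xi>\<in>space P. count_in (Lambda l g) \<xi> = 0} \<le> C * l powr (- N)"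
proof -
  define q where "q = prob {\<xi>\<in>space P. count_in unit_cube \<xi> = 0}"
  have q: "0 \<le> q" "q < 1" unfolding q_def using prob_void_unit_cube_less_1[OF m] by auto
  obtain Cq where Cq: "0 \<le> Cq" "\<And>n::nat. q ^ n \<le> Cq * (real n + 1) powr (- N)"
    using geometric_le_powr_decay[OF q N] by auto
  show ?thesis
  proof (rule that[of "Cq * (1 + L) powr N"])
    show "0 \<le> Cq * (1 + L) powr N" using Cq(1) by simp
    fix l :: real and g :: 'a assume l: "1 \<le> l"
    define n where "n = nat \<lfloor>(2 * l - 1) / (1 + L)\<rfloor> + 1"
    have "l \<le> 2 * l - 1" using l by simp
    then have "l / (1 + L) \<le> (2 * l - 1) / (1 + L)" using L by (intro divide_right_mono) auto
    also have "\<dots> \<le> real n + 1" unfolding n_def using l L by linarith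
    finally have n: "l / (1 + L) \<le> real n + 1" .
    have "prob {\<xi>\<in>space P. count_in (Lambda l g) \<xi> = 0} \<le> q ^ n"
      unfolding q_def n_def by (rule prob_void_Lambda_le_power[OF indep L l])
    also have "\<dots> \<le> Cq * (real n + 1) powr (- N)" by (rule Cq(2))
    also have "\<dots> \<le> Cq * (l / (1 + L)) powr (- N)"
      using n l L Cq(1) N by (intro mult_left_mono powr_mono2') auto
    also have "\<dots> = Cq * (1 + L) powr N * l powr (- N)"
      using l L by (simp add: divide_powr_uminus)
    finally show "prob {\<xi>\<in>space P. count_in (Lambda l g) \<xi> = 0} \<le> Cq * (1 + L) powr N * l powr (- N)" .
  qed
qed

lemma palm_deg0_pow_finite_C2:
  assumes p: "1 \<le> p" and m: "0 < intensity P" and rho: "rho P (p + 1) < \<infinity>"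
    and frd: "finite_range_dep P"
  shows "palm_exp P (\<lambda>\<xi>. deg0_pow \<xi> p) < \<infinity>"
proof -
  obtain L where L: "0 < L" and indep: "\<And>A B. A \<in> sets borel \<Longrightarrow> B \<in> sets borel \<Longrightarrow>
      (\<forall>a\<in>A. \<forall>b\<in>B. L \<le> dist a b) \<Longrightarrow> indep_var N_space (\<lambda>\<xi>. \<xi> \<inter> A) N_space (\<lambda>\<xi>. \<xi> \<inter> B)"
    using frd unfolding finite_range_dep_def by blast
  define d where "d = real DIM('a)"
  have d: "1 \<le> d" unfolding d_def using DIM_positive[where 'a='a] by linarith
  define N where "N = d * p + 1"
  have N: "0 \<le> N" unfolding N_def using d p by simp
  obtain C where C: "0 \<le> C" "\<And>l g. 1 \<le> l \<Longrightarrow> prob {\<xi>\<in>space P. count_in (Lambda l g) \<xi> = 0} \<le> C * l powr (- N)"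
    using prob_void_Lambda_le_powr[OF indep L m N] by blast
  define S where "S = 6 * d * (1 + L) + 1"
  show ?thesis
  proof (rule palm_deg0_pow_finite_if_void_prob_decay[OF p m rho, of S N "C * (6 * d) powr N"])
    have "6 * d \<le> 6 * d * (1 + L)" using d L by simp
    then show "2 * real DIM('a) < S" unfolding S_def d_def by linarith
    show "real DIM('a) * p < N" "0 \<le> C * (6 * d) powr N" unfolding N_def d_def using C(1) by simp_all
    fix r g assume "S \<le> r"
    define h where "h = r / real (3 * DIM('a))"
    have "2 * (1 + L) \<le> h" using \<open>S \<le> r\<close> d unfolding h_def S_def d_def by (simp add: field_simps)
    then have l: "1 \<le> h - L" "h / 2 \<le> h - L" "0 < h / 2" using L by simp_all
    have r: "0 < r" "r / (6 * d) = h / 2" using l(3) unfolding h_def d_def by (simp_all add: field_simps)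
    have "prob {\<xi>\<in>space P. count_in (Lambda (h - L) g) \<xi> = 0} \<le> C * (h - L) powr (- N)"
      by (rule C(2)[OF l(1)])
    also have "\<dots> \<le> C * (r / (6 * d)) powr (- N)"
      unfolding r(2) using l C(1) N by (intro mult_left_mono powr_mono2') auto
    also have "\<dots> = C * (6 * d) powr N * r powr (- N)"
      using r(1) d by (simp add: divide_powr_uminus)
    finally have void: "prob {\<xi>\<in>space P. count_in (Lambda (h - L) g) \<xi> = 0} \<le> C * (6 * d) powr N * r powr (- N)" .
    have "1 \<le> 4 * r + 1" using r(1) by simp
    then have "(\<integral>\<^sup>+\<xi>. cube_count \<xi> * of_bool (count_in (Lambda h g) \<xi> = 0) *
          ennreal (real (count_in (Lambda (4 * r + 1) 0) \<xi>) powr p) \<partial>P)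
        \<le> (\<integral>\<^sup>+\<xi>. cube_count \<xi> * ennreal (real (count_in (Lambda (4 * r + 1) 0) \<xi>) powr p) \<partial>P) *
          ennreal (prob {\<xi>\<in>space P. count_in (Lambda (h - L) g) \<xi> = 0})"
      using p by (intro void_moment_le_indep[OF indep L]) auto
    also have "\<dots> \<le> (\<integral>\<^sup>+\<xi>. cube_count \<xi> * ennreal (real (count_in (Lambda (4 * r + 1) 0) \<xi>) powr p) \<partial>P) *
          ennreal (C * (6 * d) powr N * r powr (- N))"
      using void by (intro mult_left_mono ennreal_leI) auto
    finally show "(\<integral>\<^sup>+\<xi>. cube_count \<xi> * of_bool (count_in (Lambda (r / real (3 * DIM('a))) g) \<xi> = 0) *
          ennreal (real (count_in (Lambda (4 * r + 1) 0) \<xi>) powr p) \<partial>P)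
        \<le> (\<integral>\<^sup>+\<xi>. cube_count \<xi> * ennreal (real (count_in (Lambda (4 * r + 1) 0) \<xi>) powr p) \<partial>P) *
          ennreal (C * (6 * d) powr N * r powr (- N))"
      unfolding h_def .
  qed
qed

section \<open>Decay of the void probabilities: case (C3)\<close>

text \<open>Positive association applied to the increasing function
  \<open>min M (\<xi>([0,1]\<^sup>d) \<xi>(\<Lambda>\<^sub>R)\<^sup>p)\<close> of the counts in the disjoint sets \<open>[0,1]\<^sup>d\<close>,
  \<open>\<Lambda>\<^sub>R - [0,1]\<^sup>d\<close> and the increasing function \<open>-1{\<xi>(Q) = 0}\<close>.\<close>
lemma pos_assoc_void_cov:
  fixes M :: nat
  assumes pa: "pos_assoc P" and R: "1 \<le> R" and p: "0 \<le> p" and Q: "bounded Q" "Q \<in> sets borel"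
  defines "Y \<equiv> \<lambda>\<xi>. min (real M) (real (count_in unit_cube \<xi>) * real (count_in (Lambda R 0) \<xi>) powr p)"
    and "E \<equiv> {\<xi>\<in>space P. count_in Q \<xi> = 0}"
  shows "(\<integral>\<xi>. Y \<xi> * indicator E \<xi> \<partial>P) \<le> (\<integral>\<xi>. Y \<xi> \<partial>P) * prob E"
proof -
  define As :: "'a set list" where "As = [unit_cube, Lambda R 0 - unit_cube]"
  define Bs :: "'a set list" where "Bs = [Q]"
  define f :: "nat list \<Rightarrow> real" where "f xs = min (real M) (real (xs!0) * real (xs!0 + xs!1) powr p)" for xs
  define g :: "nat list \<Rightarrow> real" where "g ys = - of_bool (ys!0 = 0)" for ys
  have E: "E \<in> sets P" unfolding E_def by (rule sets_count_in_eq[OF Q])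
  have fY: "f (map (\<lambda>A. card (\<xi> \<inter> A)) As) = Y \<xi>" if \<xi>: "\<xi> \<in> space P" for \<xi>
  proof -
    have "\<xi> \<inter> Lambda R 0 = (\<xi> \<inter> unit_cube) \<union> (\<xi> \<inter> (Lambda R 0 - unit_cube))"
      using unit_cube_subset_Lambda[OF R] by blast
    moreover have "card ((\<xi> \<inter> unit_cube) \<union> (\<xi> \<inter> (Lambda R 0 - unit_cube)))
        = card (\<xi> \<inter> unit_cube) + card (\<xi> \<inter> (Lambda R 0 - unit_cube))"
      by (rule card_Un_disjoint) (auto intro: finite_Int_bounded[OF \<xi>] bounded_diff)
    ultimately have "card (\<xi> \<inter> Lambda R 0) = card (\<xi> \<inter> unit_cube) + card (\<xi> \<inter> (Lambda R 0 - unit_cube))"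
      by simp
    then show ?thesis by (simp add: f_def As_def Y_def count_in_def)
  qed
  have gE: "g (map (\<lambda>B. card (\<xi> \<inter> B)) Bs) = - indicator E \<xi>" if "\<xi> \<in> space P" for \<xi>
    using that by (simp add: g_def Bs_def E_def count_in_def indicator_def)
  have Y: "0 \<le> Y \<xi>" "Y \<xi> \<le> real M" for \<xi> unfolding Y_def by auto
  have Y_measurable [measurable]: "Y \<in> borel_measurable P" unfolding Y_def
    by (intro borel_measurable_min borel_measurable_const borel_measurable_times borel_measurable_count_in) simp_all
  have sets: "\<forall>A\<in>set As. A \<in> sets borel \<and> bounded A" "\<forall>B\<in>set Bs. B \<in> sets borel \<and> bounded B"
    using Q by (auto simp: As_def Bs_def)
  have disjoint: "disjoint_family_on (\<lambda>i. As ! i) {..<length As}" "disjoint_family_on (\<lambda>i. Bs ! i) {..<length Bs}"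
    unfolding disjoint_family_on_def As_def Bs_def by (auto simp: less_Suc_eq)
  have f_mono: "\<forall>xs ys. length xs = length As \<longrightarrow> list_all2 (\<le>) xs ys \<longrightarrow> f xs \<le> f ys"
  proof (intro allI impI)
    fix xs ys :: "nat list" assume "length xs = length As" "list_all2 (\<le>) xs ys"
    then have "xs!0 \<le> ys!0" "xs!1 \<le> ys!1" by (auto simp: list_all2_conv_all_nth As_def)
    then show "f xs \<le> f ys" unfolding f_def using p by (intro min.mono mult_mono powr_mono2) auto
  qed
  have g_mono: "\<forall>xs ys. length xs = length Bs \<longrightarrow> list_all2 (\<le>) xs ys \<longrightarrow> g xs \<le> g ys"
    by (auto simp: list_all2_conv_all_nth Bs_def g_def)
  have "integrable P (\<lambda>\<xi>. (Y \<xi>)\<^sup>2)"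
    using Y by (intro integrable_const_bound[where B = "real M ^ 2"]) (auto intro!: power_mono)
  then have f_int: "integrable P (\<lambda>\<xi>. (f (map (\<lambda>A. card (\<xi> \<inter> A)) As))\<^sup>2)"
    by (rule Bochner_Integration.integrable_cong[THEN iffD1, rotated 2]) (simp_all add: fY)
  have "integrable P (\<lambda>\<xi>. (- indicator E \<xi> :: real)\<^sup>2)"
    using E by (intro integrable_const_bound[where B = 1]) (auto simp: indicator_def)
  then have g_int: "integrable P (\<lambda>\<xi>. (g (map (\<lambda>B. card (\<xi> \<inter> B)) Bs))\<^sup>2)"
    by (rule Bochner_Integration.integrable_cong[THEN iffD1, rotated 2]) (simp_all add: gE)
  have "(\<integral>\<xi>. f (map (\<lambda>A. card (\<xi> \<inter> A)) As) * g (map (\<lambda>B. card (\<xi> \<inter> B)) Bs) \<partial>P)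
       - (\<integral>\<xi>. f (map (\<lambda>A. card (\<xi> \<inter> A)) As) \<partial>P) * (\<integral>\<xi>. g (map (\<lambda>B. card (\<xi> \<inter> B)) Bs) \<partial>P) \<ge> 0"
    using pa sets disjoint f_mono g_mono f_int g_int unfolding pos_assoc_def by blast
  moreover have "(\<integral>\<xi>. f (map (\<lambda>A. card (\<xi> \<inter> A)) As) * g (map (\<lambda>B. card (\<xi> \<inter> B)) Bs) \<partial>P)
      = - (\<integral>\<xi>. Y \<xi> * indicator E \<xi> \<partial>P)"
    by (subst integral_minus[symmetric], rule Bochner_Integration.integral_cong) (simp_all add: fY gE)
  moreover have "(\<integral>\<xi>. f (map (\<lambda>A. card (\<xi> \<inter> A)) As) \<partial>P) = (\<integral>\<xi>. Y \<xi> \<partial>P)"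
    by (rule Bochner_Integration.integral_cong) (simp_all add: fY)
  moreover have "(\<integral>\<xi>. g (map (\<lambda>B. card (\<xi> \<inter> B)) Bs) \<partial>P) = - prob E"
    using E by (simp add: Bochner_Integration.integral_cong[OF refl gE] Int_absorb2 sets.sets_into_space)
  ultimately show ?thesis by simp
qed

lemma void_moment_le_pos_assoc:
  assumes pa: "pos_assoc P" and R: "1 \<le> R" and p: "0 \<le> p" and Q: "bounded Q" "Q \<in> sets borel"
  shows "(\<integral>\<^sup>+\<xi>. cube_count \<xi> * of_bool (count_in Q \<xi> = 0) * ennreal (real (count_in (Lambda R 0) \<xi>) powr p) \<partial>P)
     \<le> (\<integral>\<^sup>+\<xi>. cube_count \<xi> * ennreal (real (count_in (Lambda R 0) \<xi>) powr p) \<partial>P) *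
       ennreal (prob {\<xi>\<in>space P. count_in Q \<xi> = 0})"
proof -
  define E where "E = {\<xi>\<in>space P. count_in Q \<xi> = 0}"
  have E: "E \<in> sets P" unfolding E_def by (rule sets_count_in_eq[OF Q])
  define Z :: "'a set \<Rightarrow> real"
    where "Z \<xi> = real (count_in unit_cube \<xi>) * real (count_in (Lambda R 0) \<xi>) powr p" for \<xi>
  define Y where "Y M \<xi> = min (real M) (Z \<xi>)" for M :: nat and \<xi>
  have Y: "0 \<le> Y M \<xi>" "Y M \<xi> \<le> real M" for M \<xi> unfolding Y_def Z_def by auto
  have Y_measurable [measurable]: "Y M \<in> borel_measurable P" for M unfolding Y_def Z_def
    by (intro borel_measurable_min borel_measurable_const borel_measurable_times borel_measurable_count_in) simp_all
  have "cube_count \<xi> * of_bool (count_in Q \<xi> = 0) * ennreal (real (count_in (Lambda R 0) \<xi>) powr p)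
      = (SUP M. ennreal (Y M \<xi> * indicator E \<xi>))" if "\<xi> \<in> space P" for \<xi>
  proof -
    obtain M :: nat where "Z \<xi> \<le> real M" using real_arch_simple by blast
    then have "Y M \<xi> = Z \<xi>" unfolding Y_def by simp
    then have "(SUP M. ennreal (Y M \<xi> * indicator E \<xi>)) = ennreal (Z \<xi> * indicator E \<xi>)"
      by (intro antisym SUP_least SUP_upper2[of M] ennreal_leI mult_right_mono) (auto simp: Y_def)
    then show ?thesis
      using that by (simp add: cube_count_def Z_def E_def indicator_def ennreal_mult[symmetric] mult_ac)
  qed
  then have "(\<integral>\<^sup>+\<xi>. cube_count \<xi> * of_bool (count_in Q \<xi> = 0) * ennreal (real (count_in (Lambda R 0) \<xi>) powr p) \<partial>P)
      = (\<integral>\<^sup>+\<xi>. (SUP M. ennreal (Y M \<xi> * indicator E \<xi>)) \<partial>P)"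
    by (intro nn_integral_cong)
  also have "\<dots> = (SUP M. \<integral>\<^sup>+\<xi>. ennreal (Y M \<xi> * indicator E \<xi>) \<partial>P)"
  proof (rule nn_integral_monotone_convergence_SUP)
    show "incseq (\<lambda>M \<xi>. ennreal (Y M \<xi> * indicator E \<xi>))"
      by (auto intro!: incseq_SucI le_funI ennreal_leI mult_right_mono simp: Y_def)
    show "(\<lambda>\<xi>. ennreal (Y M \<xi> * indicator E \<xi>)) \<in> borel_measurable P" for M
      using E by measurable
  qed
  also have "\<dots> \<le> (\<integral>\<^sup>+\<xi>. cube_count \<xi> * ennreal (real (count_in (Lambda R 0) \<xi>) powr p) \<partial>P) * ennreal (prob E)"
  proof (rule SUP_least)
    fix M
    have int_Y: "integrable P (Y M)" "integrable P (\<lambda>\<xi>. Y M \<xi> * indicator E \<xi>)"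
      using Y E by (auto intro!: integrable_const_bound[where B = "real M"] simp: indicator_def)
    have "(\<integral>\<^sup>+\<xi>. ennreal (Y M \<xi> * indicator E \<xi>) \<partial>P) = ennreal (\<integral>\<xi>. Y M \<xi> * indicator E \<xi> \<partial>P)"
      using Y by (intro nn_integral_eq_integral int_Y) auto
    also have "\<dots> \<le> ennreal ((\<integral>\<xi>. Y M \<xi> \<partial>P) * prob E)"
      using pos_assoc_void_cov[OF pa R p Q, of M] unfolding Y_def Z_def E_def by (rule ennreal_leI)
    also have "\<dots> = ennreal (\<integral>\<xi>. Y M \<xi> \<partial>P) * ennreal (prob E)"
      using Y by (intro ennreal_mult integral_nonneg_AE) auto
    also have "ennreal (\<integral>\<xi>. Y M \<xi> \<partial>P) = (\<integral>\<^sup>+\<xi>. ennreal (Y M \<xi>) \<partial>P)"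
      using Y by (intro nn_integral_eq_integral[symmetric] int_Y) auto
    also have "\<dots> \<le> (\<integral>\<^sup>+\<xi>. cube_count \<xi> * ennreal (real (count_in (Lambda R 0) \<xi>) powr p) \<partial>P)"
      by (intro nn_integral_mono) (simp add: Y_def Z_def cube_count_def ennreal_mult[symmetric] ennreal_leI)
    finally show "(\<integral>\<^sup>+\<xi>. ennreal (Y M \<xi> * indicator E \<xi>) \<partial>P)
        \<le> (\<integral>\<^sup>+\<xi>. cube_count \<xi> * ennreal (real (count_in (Lambda R 0) \<xi>) powr p) \<partial>P) * ennreal (prob E)"
      by (simp add: mult_right_mono)
  qed
  finally show ?thesis unfolding E_def .
qed

lemma palm_deg0_pow_finite_C3:
  assumes p: "1 \<le> p" and m: "0 < intensity P" and rho: "rho P (p + 1) < \<infinity>"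
    and pa: "pos_assoc P" and \<alpha>: "real DIM('a) * p < \<alpha>" and C\<alpha>: "condC P \<alpha>"
  shows "palm_exp P (\<lambda>\<xi>. deg0_pow \<xi> p) < \<infinity>"
proof -
  define d where "d = real DIM('a)"
  have d: "1 \<le> d" unfolding d_def using DIM_positive[where 'a='a] by linarith
  obtain \<kappa> where \<kappa>: "0 < \<kappa>" "\<And>l. 1 \<le> l \<Longrightarrow> prob {\<xi>\<in>space P. \<xi> \<inter> Lambda l 0 = {}} \<le> \<kappa> * l powr (- \<alpha>)"
    using C\<alpha> unfolding condC_def by blast
  show ?thesis
  proof (rule palm_deg0_pow_finite_if_void_prob_decay[OF p m rho _ \<alpha>, of "3 * d + 1" "\<kappa> * (3 * d) powr \<alpha>"])
    show "2 * real DIM('a) < 3 * d + 1" "0 \<le> \<kappa> * (3 * d) powr \<alpha>" using \<kappa>(1) unfolding d_def by simp_all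
    fix r g assume "3 * d + 1 \<le> r"
    define h where "h = r / real (3 * DIM('a))"
    have r: "1 \<le> r" and h: "1 \<le> h" using \<open>3 * d + 1 \<le> r\<close> d unfolding h_def d_def by (simp_all add: field_simps)
    have "prob {\<xi>\<in>space P. count_in (Lambda h g) \<xi> = 0} \<le> \<kappa> * h powr (- \<alpha>)"
      using prob_void_Lambda \<kappa>(2)[OF h] by simp
    also have "h powr (- \<alpha>) = (3 * d) powr \<alpha> * r powr (- \<alpha>)"
      unfolding h_def d_def using r by (simp add: divide_powr_uminus)
    finally have void: "prob {\<xi>\<in>space P. count_in (Lambda h g) \<xi> = 0} \<le> \<kappa> * (3 * d) powr \<alpha> * r powr (- \<alpha>)"
      by (simp add: mult.assoc)
    have "(\<integral>\<^sup>+\<xi>. cube_count \<xi> * of_bool (count_in (Lambda h g) \<xi> = 0) *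
          ennreal (real (count_in (Lambda (4 * r + 1) 0) \<xi>) powr p) \<partial>P)
        \<le> (\<integral>\<^sup>+\<xi>. cube_count \<xi> * ennreal (real (count_in (Lambda (4 * r + 1) 0) \<xi>) powr p) \<partial>P) *
          ennreal (prob {\<xi>\<in>space P. count_in (Lambda h g) \<xi> = 0})"
      using r p by (intro void_moment_le_pos_assoc[OF pa]) auto
    also have "\<dots> \<le> (\<integral>\<^sup>+\<xi>. cube_count \<xi> * ennreal (real (count_in (Lambda (4 * r + 1) 0) \<xi>) powr p) \<partial>P) *
          ennreal (\<kappa> * (3 * d) powr \<alpha> * r powr (- \<alpha>))"
      using void by (intro mult_left_mono ennreal_leI) auto
    finally show "(\<integral>\<^sup>+\<xi>. cube_count \<xi> * of_bool (count_in (Lambda (r / real (3 * DIM('a))) g) \<xi> = 0) *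
          ennreal (real (count_in (Lambda (4 * r + 1) 0) \<xi>) powr p) \<partial>P)
        \<le> (\<integral>\<^sup>+\<xi>. cube_count \<xi> * ennreal (real (count_in (Lambda (4 * r + 1) 0) \<xi>) powr p) \<partial>P) *
          ennreal (\<kappa> * (3 * d) powr \<alpha> * r powr (- \<alpha>))"
      unfolding h_def .
  qed
qed

end

theorem proposition11p1:
  fixes P :: "'a::euclidean_space set measure" and p :: real
  assumes "prob_space P"
    and "sets P = sets N_space"
    and "stationary P"
    and "integrable P (\<lambda>\<xi>. real (card (\<xi> \<inter> unit_cube)))"
    and "intensity P > 0"
    and "measure P {\<xi>\<in>space P. \<xi> \<noteq> {}} = 1"
    and "p \<ge> 1"
    and "(\<exists>\<alpha>' C0 \<gamma>. \<alpha>' > 0 \<and> C0 > 0 \<and> \<gamma> > p + 1 \<and> rho P \<gamma> < \<infinity> \<and>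
            \<alpha>' > real DIM('a) * p * (\<gamma> - 1) / (\<gamma> - 1 - p) \<and>
            (\<forall>x l. l > 0 \<longrightarrow>
               palm_prob P {\<xi>. \<xi> \<inter> Lambda l x = {}} \<le> ennreal (C0 * l powr (-\<alpha>'))))
       \<or> (rho P (1 + p) < \<infinity> \<and> finite_range_dep P)
       \<or> (rho P (1 + p) < \<infinity> \<and> pos_assoc P \<and> (\<exists>\<alpha>. \<alpha> > real DIM('a) * p \<and> condC P \<alpha>))"
  shows "palm_exp P (\<lambda>\<xi>. deg0_pow \<xi> p) < \<infinity>"
proof -
  interpret stationary_point_process P using assms(1-3) by (rule stationary_point_process.intro)
  from assms(8) show ?thesis
  proof (elim disjE conjE exE)
    fix \<alpha>' C0 \<gamma>
    assume "\<alpha>' > 0" "C0 > 0" "\<gamma> > p + 1" "rho P \<gamma> < \<infinity>"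
      "\<alpha>' > real DIM('a) * p * (\<gamma> - 1) / (\<gamma> - 1 - p)"
      "\<forall>x l. l > 0 \<longrightarrow> palm_prob P {\<xi>. \<xi> \<inter> Lambda l x = {}} \<le> ennreal (C0 * l powr (-\<alpha>'))"
    then show ?thesis by (rule palm_deg0_pow_finite_C1[OF assms(7,5)])
  next
    assume "rho P (1 + p) < \<infinity>" "finite_range_dep P"
    then show ?thesis by (intro palm_deg0_pow_finite_C2[OF assms(7,5)]) (simp_all add: add.commute)
  next
    fix \<alpha> assume "rho P (1 + p) < \<infinity>" "pos_assoc P" "\<alpha> > real DIM('a) * p" "condC P \<alpha>"
    then show ?thesis by (intro palm_deg0_pow_finite_C3[OF assms(7,5)]) (simp_all add: add.commute)
  qed
qed

end
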